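(* Under the hypotheses below, there exists a random variable $B_\infty$ such that $\lim_{t\to\infty}B_{\phi_t}(x^*,x_t)=B_\infty<\infty$ almost surely.
   Context: $\|\cdot\|$ is the Euclidean norm, $G>0$. For differentiable $f$, $B_f(x,y)=f(x)-f(y)-\langle\nabla f(y),x-y\rangle$. A function $F:\mathbb{R}^d\to\mathbb{R}$ is variationally coherent if it is continuously differentiable, has a unique minimizer $x^*$, and $\langle\nabla F(x),x-x^*\rangle\ge0$ for all $x$, with equality iff $x=x^*$. Hypotheses: $F$ is variationally coherent with minimizer $x^*$; iterates $x_t$ are produced by Algorithm 1 (below, with $x_0=0$); $\mathcal{F}_t$ is the $\sigma$-algebra generated by $x_1,\dots,x_t,g_1,\dots,g_{t-1}$; $\mathbb{E}[g_t\mid\mathcal{F}_t]=\nabla F(x_t)$, $\|g_t\|\le G$ a.s.; $\eta_t\ge0$ is $\mathcal{F}_t$-measurable; for some $\gamma>0$, a.s. $\sum_t\eta_t^2\|g_t\|^2<\gamma$, $\sum_t\eta_t=\infty$, and $\eta_t\le1/G$ for all $t$. Auxiliary functions: $\psi^*(\theta,S,Q)=\exp\big(\max_{\beta\in[-1/2,1/2]}(\theta\beta-\beta^2S^2)-Q\big)$ for $\theta\in\mathbb{R},S>0,Q\ge0$; $\psi(x,S,Q)=\sup_{\theta\in\mathbb{R}}(\theta x-\psi^*(\theta,S,Q))$. Algorithm 1 with $x_0=0$: $S_0^2=4$, $Q_0=0$, $\theta_0=0$. For $t=1,2,\dots$: $\phi_t(x)=\psi(\|x\|,S_{t-1},Q_{t-1})$;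 $x_t$ is the unique minimizer of $\phi_t(x)-\langle\theta_{t-1},x\rangle$ (explicitly $x_t=\frac{\theta_{t-1}}{2S_{t-1}^2}\exp(\frac{\|\theta_{t-1}\|^2}{4S_{t-1}^2}-Q_{t-1})$ if $\|\theta_{t-1}\|\le S_{t-1}^2$, else $\frac{\theta_{t-1}}{2\|\theta_{t-1}\|}\exp(\frac{\|\theta_{t-1}\|}{2}-\frac{S_{t-1}^2}{4}-Q_{t-1})$); receive $g_t$; $\ell_t=\eta_tg_t$, $S_t^2=S_{t-1}^2+\|\ell_t\|^2$, $Q_t=Q_{t-1}+\|\ell_t\|^2/S_t^2$, $\theta_t=\theta_{t-1}-\ell_t$. *)

theory Defs
  imports "HOL-Analysis.Analysis" "HOL-Probability.Probability"
begin

definition bregman :: "('v::euclidean_space \<Rightarrow> real) \<Rightarrow> 'v \<Rightarrow> 'v \<Rightarrow> real" where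
  "bregman f x y = f x - f y - (THE v. (f has_derivative (\<lambda>h. v \<bullet> h)) (at y)) \<bullet> (x - y)"

definition variationally_coherent ::
  "('v::euclidean_space \<Rightarrow> real) \<Rightarrow> ('v \<Rightarrow> 'v) \<Rightarrow> 'v \<Rightarrow> bool" where
  "variationally_coherent F gradF xstar \<longleftrightarrow>
     (\<forall>x. (F has_derivative (\<lambda>h. gradF x \<bullet> h)) (at x)) \<and>
     continuous_on UNIV gradF \<and>
     (\<forall>x. F xstar \<le> F x) \<and> (\<forall>y. (\<forall>x. F y \<le> F x) \<longrightarrow> y = xstar) \<and>
     (\<forall>x. gradF x \<bullet> (x - xstar) \<ge> 0) \<and>
     (\<forall>x. gradF x \<bullet> (x - xstar) = 0 \<longleftrightarrow> x = xstar)"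

definition psi_star :: "real \<Rightarrow> real \<Rightarrow> real \<Rightarrow> real" where
  "psi_star \<theta> S Q = exp ((SUP \<beta>\<in>{-1/2..1/2}. \<theta> * \<beta> - \<beta>\<^sup>2 * S\<^sup>2) - Q)"

definition psi :: "real \<Rightarrow> real \<Rightarrow> real \<Rightarrow> real" where
  "psi x S Q = (SUP \<theta>::real. \<theta> * x - psi_star \<theta> S Q)"

text \<open>State (S_t^2, Q_t, theta_t) of Algorithm 1 (x_0 = 0) after step t,
  for losses g_1, g_2, ... and step sizes eta_1, eta_2, ... (index 0 unused).\<close>
fun alg_state :: "(nat \<Rightarrow> 'v::real_normed_vector) \<Rightarrow> (nat \<Rightarrow> real) \<Rightarrow> nat \<Rightarrow> real \<times> real \<times> 'v" where
  "alg_state g eta 0 = (4, 0, 0)"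
| "alg_state g eta (Suc t) =
     (case alg_state g eta t of (S2, Q, \<theta>) \<Rightarrow>
        let l = eta (Suc t) *\<^sub>R g (Suc t); S2' = S2 + (norm l)\<^sup>2
        in (S2', Q + (norm l)\<^sup>2 / S2', \<theta> - l))"

text \<open>Iterate x_t (t >= 1), via the explicit minimizer formula.\<close>
definition alg_x :: "(nat \<Rightarrow> 'v::real_normed_vector) \<Rightarrow> (nat \<Rightarrow> real) \<Rightarrow> nat \<Rightarrow> 'v" where
  "alg_x g eta t =
     (case alg_state g eta (t - 1) of (S2, Q, \<theta>) \<Rightarrow>
        if norm \<theta> \<le> S2
        then (exp ((norm \<theta>)\<^sup>2 / (4 * S2) - Q) / (2 * S2)) *\<^sub>R \<theta>
        else (exp (norm \<theta> / 2 - S2 / 4 - Q) / (2 * norm \<theta>)) *\<^sub>R \<theta>)"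

definition alg_phi :: "(nat \<Rightarrow> 'v::real_normed_vector) \<Rightarrow> (nat \<Rightarrow> real) \<Rightarrow> nat \<Rightarrow> 'v \<Rightarrow> real" where
  "alg_phi g eta t x =
     (case alg_state g eta (t - 1) of (S2, Q, \<theta>) \<Rightarrow> psi (norm x) (sqrt S2) Q)"

definition alg_filtration ::
  "'a measure \<Rightarrow> (nat \<Rightarrow> 'a \<Rightarrow> 'v::euclidean_space) \<Rightarrow> (nat \<Rightarrow> 'a \<Rightarrow> 'v) \<Rightarrow> nat \<Rightarrow> 'a measure" where
  "alg_filtration M x g t = sigma (space M)
     ((\<Union>i\<in>{1..t}. {x i -` A \<inter> space M | A. A \<in> sets borel}) \<union>
      (\<Union>i\<in>{1..<t}. {g i -` A \<inter> space M | A. A \<in> sets borel}))"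

end

theory Submission
  imports Defs
begin

text \<open>With \<open>pot S2 Q\<close> the closed form of \<open>psi_star\<close>, the regularizer \<open>phi_t\<close> is the convex
  conjugate of \<open>pot\<close> composed with the norm, and \<open>x_t = \<nabla>pot(\<theta>_{t-1})\<close>. Fenchel--Young
  equality therefore splits the divergence as
  \<open>B_{phi_t}(x*, x_t) = phi_t(x*) + (pot(\<theta>_{t-1}) - \<theta>_{t-1} \<bullet> x*)\<close>.
  The first term is nondecreasing in \<open>t\<close> and bounded, because \<open>\<Sum> |l_t|\<^sup>2 < \<gamma>\<close> bounds
  \<open>S_t\<close> and \<open>Q_t\<close>. The second term is bounded below by Fenchel--Young, and a one-step
  inequality for the potential shows that it decreases at step \<open>t\<close> by at least
  \<open>\<eta>_t g_t \<bullet> (x_t - x*)\<close>, whose conditional expectation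
  \<open>\<eta>_t \<nabla>F(x_t) \<bullet> (x_t - x*)\<close> is nonnegative by variational coherence. So it is a
  supermartingale bounded below and converges almost surely by Doob's upcrossing argument.\<close>

section \<open>The Huber function and the exponential potential\<close>

definition huber :: "real \<Rightarrow> real \<Rightarrow> real" where
  "huber S2 r = (if r \<le> S2 then r\<^sup>2 / (4*S2) else r/2 - S2/4)"

text \<open>\<open>huber S2 r\<close> is the maximum of \<open>c * r - c\<^sup>2 * S2\<close> over \<open>0 \<le> c \<le> 1/2\<close>; for \<open>r = norm v\<close>
  the maximum is attained at \<open>c = norm (huber_grad S2 v)\<close>, and \<open>huber_grad S2 v\<close> is the
  gradient of \<open>huber S2 (norm v)\<close>.\<close>
definition huber_grad :: "real \<Rightarrow> 'v::real_normed_vector \<Rightarrow> 'v" where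
  "huber_grad S2 v = (if norm v \<le> S2 then 1/(2*S2) else 1/(2*norm v)) *\<^sub>R v"

definition pot :: "real \<Rightarrow> real \<Rightarrow> 'v::real_normed_vector \<Rightarrow> real" where
  "pot S2 Q v = exp (huber S2 (norm v) - Q)"

definition pot_grad :: "real \<Rightarrow> real \<Rightarrow> 'v::real_normed_vector \<Rightarrow> 'v" where
  "pot_grad S2 Q v = pot S2 Q v *\<^sub>R huber_grad S2 v"

lemma huber_ge:
  assumes "0 \<le> c" "c \<le> 1/2" "0 \<le> r" "S2 > 0"
  shows "c*r - c\<^sup>2*S2 \<le> huber S2 r"
proof (cases "r \<le> S2")
  case True
  have "r\<^sup>2 / (4*S2) - (c*r - c\<^sup>2*S2) = (r - 2*c*S2)\<^sup>2 / (4*S2)"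
    using assms by (simp add: field_simps power2_eq_square)
  moreover have "(r - 2*c*S2)\<^sup>2 / (4*S2) \<ge> 0" using assms by simp
  ultimately show ?thesis using True by (simp add: huber_def)
next
  case False
  have "r/2 - S2/4 - (c*r - c\<^sup>2*S2) = (1/2 - c) * (r - S2*(1/2 + c))"
    by (simp add: field_simps power2_eq_square)
  moreover have "(1/2 - c) * (r - S2*(1/2 + c)) \<ge> 0"
    using assms False by (intro mult_nonneg_nonneg) (auto intro: order_trans[of _ "S2*1"] mult_left_mono)
  ultimately show ?thesis using False by (simp add: huber_def)
qed

lemma huber_ge_inner:
  fixes \<beta> u :: "'v::real_inner"
  assumes "norm \<beta> \<le> 1/2" "S2 > 0"
  shows "\<beta> \<bullet> u - (norm \<beta>)\<^sup>2*S2 \<le> huber S2 (norm u)"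
proof -
  have "\<beta> \<bullet> u \<le> norm \<beta> * norm u" by (rule norm_cauchy_schwarz)
  moreover have "norm \<beta> * norm u - (norm \<beta>)\<^sup>2*S2 \<le> huber S2 (norm u)"
    by (rule huber_ge) (use assms in auto)
  ultimately show ?thesis by linarith
qed

lemma norm_huber_grad:
  "S2 > 0 \<Longrightarrow> norm (huber_grad S2 (v::'v::real_normed_vector)) = (if norm v \<le> S2 then norm v/(2*S2) else 1/2)"
  by (auto simp: huber_grad_def)

lemma norm_huber_grad_le: "S2 > 0 \<Longrightarrow> norm (huber_grad S2 (v::'v::real_normed_vector)) \<le> 1/2"
  by (auto simp: norm_huber_grad field_simps)

lemma inner_huber_grad:
  "S2 > 0 \<Longrightarrow> huber_grad S2 v \<bullet> (v::'v::real_inner) = norm (huber_grad S2 v) * norm v"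
  by (auto simp: huber_grad_def norm_huber_grad power2_eq_square dot_square_norm)

lemma huber_eq_inner:
  fixes v :: "'v::real_inner"
  assumes "S2 > 0"
  shows "huber_grad S2 v \<bullet> v - (norm (huber_grad S2 v))\<^sup>2 * S2 = huber S2 (norm v)"
  using assms by (auto simp: inner_huber_grad norm_huber_grad huber_def field_simps power2_eq_square)

lemma huber_tangent:
  fixes u v :: "'v::real_inner"
  assumes "S2 > 0"
  shows "huber S2 (norm v) + huber_grad S2 v \<bullet> (u - v) \<le> huber S2 (norm u)"
  using huber_ge_inner[OF norm_huber_grad_le[OF assms] assms, of v u] huber_eq_inner[OF assms, of v]
  by (simp add: inner_diff_right)

lemma huber_antimono:
  assumes "0 < S2" "S2 \<le> S2'" "0 \<le> r"
  shows "huber S2' r \<le> huber S2 r"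
proof -
  have S2': "S2' > 0" using assms by simp
  have "huber S2' r = huber_grad S2' r * r - (huber_grad S2' r)\<^sup>2 * S2'"
    using huber_eq_inner[OF S2', of r] assms(3) by simp
  also have "\<dots> \<le> huber_grad S2' r * r - (huber_grad S2' r)\<^sup>2 * S2" using assms by (simp add: mult_left_mono)
  also have "\<dots> \<le> huber S2 (norm r)" using huber_ge_inner[OF norm_huber_grad_le[OF S2'] assms(1), of r r] by simp
  finally show ?thesis using assms(3) by simp
qed

lemma psi_star_eq_pot:
  assumes "S2 > 0"
  shows "psi_star t (sqrt S2) Q = pot S2 Q t"
proof -
  have "(SUP \<beta>\<in>{-1/2..1/2}. t * \<beta> - \<beta>\<^sup>2 * S2) = huber S2 \<bar>t\<bar>"
    unfolding image_def
  proof (rule cSup_eq_maximum)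
    have "huber_grad S2 t \<in> {-1/2..1/2}" using norm_huber_grad_le[OF assms, of t] by auto
    moreover have "t * huber_grad S2 t - (huber_grad S2 t)\<^sup>2 * S2 = huber S2 \<bar>t\<bar>"
      using huber_eq_inner[OF assms, of t] by (simp add: mult.commute)
    ultimately show "huber S2 \<bar>t\<bar> \<in> {y. \<exists>\<beta>\<in>{-1/2..1/2}. y = t * \<beta> - \<beta>\<^sup>2 * S2}" by force
  next
    fix y assume "y \<in> {y. \<exists>\<beta>\<in>{-1/2..1/2}. y = t * \<beta> - \<beta>\<^sup>2 * S2}"
    then obtain \<beta> where "\<beta> \<in> {-1/2..1/2}" "y = t*\<beta> - \<beta>\<^sup>2 * S2" by auto
    with huber_ge_inner[of \<beta> S2 t] assms show "y \<le> huber S2 \<bar>t\<bar>" by (auto simp: mult.commute)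
  qed
  thus ?thesis using assms by (simp add: psi_star_def pot_def)
qed

lemma psi_eq_SUP_pot:
  "S2 > 0 \<Longrightarrow> psi s (sqrt S2) Q = (SUP t::real. t * s - pot S2 Q t)"
  by (simp add: psi_def psi_star_eq_pot)

lemma pot_pos: "pot S2 Q v > 0"
  by (simp add: pot_def)

lemma pot_norm: "pot S2 Q (norm v) = pot S2 Q v"
  by (simp add: pot_def)

lemma norm_pot_grad: "S2 > 0 \<Longrightarrow> norm (pot_grad S2 Q (v::'v::real_normed_vector)) = pot_grad S2 Q (norm v)"
  by (auto simp: pot_grad_def huber_grad_def pot_def abs_mult)

lemma norm_pot_grad_le: "S2 > 0 \<Longrightarrow> norm (pot_grad S2 Q v) \<le> pot S2 Q v"
  using norm_huber_grad_le[of S2 v] by (auto simp: pot_grad_def pot_pos less_imp_le intro: mult_left_le)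

lemma inner_pot_grad:
  assumes "S2 > 0"
  shows "v \<bullet> pot_grad S2 Q v = norm v * norm (pot_grad S2 Q (v::'v::real_inner))"
  using assms by (simp add: pot_grad_def inner_commute[of v] inner_huber_grad abs_mult pot_pos less_imp_le)

lemma pot_convex:
  fixes u v :: "'v::real_inner"
  assumes "S2 > 0"
  shows "pot S2 Q v + pot_grad S2 Q v \<bullet> (u - v) \<le> pot S2 Q u"
proof -
  let ?b = "huber_grad S2 v"
  have "pot S2 Q v * (1 + ?b \<bullet> (u - v)) \<le> pot S2 Q v * exp (?b \<bullet> (u - v))"
    by (intro mult_left_mono) (auto simp: pot_def exp_ge_add_one_self)
  also have "\<dots> = exp (huber S2 (norm v) + ?b \<bullet> (u - v) - Q)"
    unfolding pot_def exp_add[symmetric] by (simp add: algebra_simps)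
  also have "\<dots> \<le> pot S2 Q u" using huber_tangent[OF assms, of v u] by (simp add: pot_def)
  finally show ?thesis by (simp add: pot_grad_def algebra_simps)
qed

lemma exp_neg_le_one_minus:
  fixes y :: real
  assumes "\<bar>y\<bar> \<le> 1/2"
  shows "exp (- y - y\<^sup>2) \<le> 1 - y"
proof -
  have "- y - y\<^sup>2 \<le> ln (1 - y)"
  proof (cases "y \<ge> 0")
    case True
    let ?f = "\<lambda>x::real. ln (1 - x) + x + x\<^sup>2"
    have "?f 0 \<le> ?f y"
    proof (rule DERIV_nonneg_imp_nondecreasing[OF True])
      fix x :: real assume x: "0 \<le> x" "x \<le> y"
      have "DERIV ?f x :> x * (1 - 2*x) / (1 - x)"
        using x assms by (auto intro!: derivative_eq_intros simp: power2_eq_square field_simps)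
      moreover have "x * (1 - 2*x) / (1 - x) \<ge> 0"
        using x assms by (intro divide_nonneg_pos mult_nonneg_nonneg) auto
      ultimately show "\<exists>d. DERIV ?f x :> d \<and> d \<ge> 0" by blast
    qed
    thus ?thesis by simp
  next
    case False
    have "(-y) - (-y)\<^sup>2 \<le> ln (1 + (-y))"
      by (rule ln_one_plus_pos_lower_bound) (use False assms in auto)
    thus ?thesis by simp
  qed
  thus ?thesis using assms by (subst (asm) ln_ge_iff) auto
qed

lemma huber_ge_inner_strong:
  fixes \<beta> \<theta> :: "'v::real_inner"
  assumes \<beta>: "norm \<beta> \<le> 1/2" and S2: "S2 > 0"
  shows "\<beta> \<bullet> \<theta> - (norm \<beta>)\<^sup>2 * S2 \<le> huber S2 (norm \<theta>) - S2 * (norm (\<beta> - huber_grad S2 \<theta>))\<^sup>2"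
proof -
  define b where "b = huber_grad S2 \<theta>"
  have gap: "huber S2 (norm \<theta>) - \<beta> \<bullet> \<theta> + (norm \<beta>)\<^sup>2 * S2 - S2 * (norm (\<beta> - b))\<^sup>2
           = (b - \<beta>) \<bullet> (\<theta> - (2*S2) *\<^sub>R b)"
    unfolding huber_eq_inner[OF S2, of \<theta>, symmetric] b_def
    by (simp add: dot_square_norm[symmetric] inner_diff_left inner_diff_right inner_commute algebra_simps)
  have "(b - \<beta>) \<bullet> (\<theta> - (2*S2) *\<^sub>R b) \<ge> 0"
  proof (cases "norm \<theta> \<le> S2")
    case True
    hence "\<theta> - (2*S2) *\<^sub>R b = 0" using S2 by (simp add: b_def huber_grad_def)
    thus ?thesis by simp
  next
    case False
    hence "\<theta> - (2*S2) *\<^sub>R b = (1 - S2 / norm \<theta>) *\<^sub>R \<theta>"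
      using S2 by (simp add: b_def huber_grad_def algebra_simps)
    moreover have "1 - S2 / norm \<theta> \<ge> 0" using False S2 by (simp add: divide_le_eq_1)
    moreover have "b \<bullet> \<theta> = norm \<theta> / 2"
      using False S2 by (simp add: b_def huber_grad_def dot_square_norm power2_eq_square)
    moreover have "\<beta> \<bullet> \<theta> \<le> 1/2 * norm \<theta>"
      using norm_cauchy_schwarz[of \<beta> \<theta>] mult_right_mono[OF \<beta>, of "norm \<theta>"] by simp
    ultimately show ?thesis by (simp add: inner_diff_left)
  qed
  thus ?thesis using gap by (simp add: b_def)
qed

text \<open>The increment \<open>L / (S2 + L)\<close> of \<open>Q\<close> is what absorbs the second-order error of the step.\<close>
lemma huber_step:
  fixes \<theta> l :: "'v::real_inner"
  assumes S2: "S2 > 0" and l1: "norm l \<le> 1"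
  defines "L \<equiv> (norm l)\<^sup>2" and "y \<equiv> l \<bullet> huber_grad S2 \<theta>"
  shows "huber (S2 + L) (norm (\<theta> - l)) - huber S2 (norm \<theta>) - L / (S2 + L) \<le> - y - y\<^sup>2"
proof -
  define P where "P = S2 + L"
  define b where "b = huber_grad S2 \<theta>"
  define \<beta> where "\<beta> = huber_grad P (\<theta> - l)"
  define \<delta> where "\<delta> = \<beta> - b"
  define w where "w = l + (2*L) *\<^sub>R b"
  have L0: "0 \<le> L" and L1: "L \<le> 1" using l1 by (auto simp: L_def power_le_one)
  have P0: "P > 0" using S2 L0 by (simp add: P_def)
  have nb: "norm b \<le> 1/2" using norm_huber_grad_le[OF S2] by (simp add: b_def)
  have hb2: "(norm b)\<^sup>2 \<le> 1/4" using power_mono[OF nb, of 2] by (simp add: power2_eq_square)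
  have y_le: "\<bar>y\<bar> \<le> norm l * norm b" unfolding y_def b_def by (rule Cauchy_Schwarz_ineq2)
  have hy: "\<bar>y\<bar> \<le> 1/2" using y_le mult_mono[OF l1 nb] by simp
  have hy2: "y\<^sup>2 \<le> L * (norm b)\<^sup>2"
    using power_mono[OF y_le, of 2] by (simp add: L_def power_mult_distrib)
  have A: "huber P (norm (\<theta> - l)) \<le> huber S2 (norm \<theta>) - S2 * (norm \<delta>)\<^sup>2 - \<beta> \<bullet> l - (norm \<beta>)\<^sup>2 * L"
  proof -
    have "huber P (norm (\<theta> - l)) = \<beta> \<bullet> (\<theta> - l) - (norm \<beta>)\<^sup>2 * P"
      using huber_eq_inner[OF P0, of "\<theta> - l"] by (simp add: \<beta>_def)
    moreover have "\<beta> \<bullet> \<theta> - (norm \<beta>)\<^sup>2 * S2 \<le> huber S2 (norm \<theta>) - S2 * (norm \<delta>)\<^sup>2"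
      using huber_ge_inner_strong[OF norm_huber_grad_le[of P "\<theta> - l", OF P0] S2, of \<theta>]
      by (simp add: \<beta>_def \<delta>_def b_def)
    ultimately show ?thesis by (simp add: P_def inner_diff_right algebra_simps)
  qed
  have completed_square: "P * (norm \<delta>)\<^sup>2 + \<delta> \<bullet> w \<ge> - (norm w)\<^sup>2 / (4*P)"
  proof -
    have "0 \<le> (norm ((2*P) *\<^sub>R \<delta> + w))\<^sup>2" by simp
    also have "\<dots> = 4*P*(P * (norm \<delta>)\<^sup>2 + \<delta> \<bullet> w) + (norm w)\<^sup>2"
      unfolding power2_norm_eq_inner
      by (simp add: inner_add_left inner_add_right inner_commute algebra_simps power2_eq_square)
    finally show ?thesis using P0 by (simp add: field_simps)
  qed
  have norm_w: "(norm w)\<^sup>2 = L + 4*L*y + 4*L\<^sup>2*(norm b)\<^sup>2"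
    unfolding power2_norm_eq_inner w_def L_def y_def b_def
    by (simp add: inner_add_left inner_add_right inner_commute algebra_simps power2_eq_square)
  have "(norm w)\<^sup>2 / (4*P) - L * (norm b)\<^sup>2 - L/P \<le> - y\<^sup>2"
  proof -
    have "P * y\<^sup>2 \<le> P * (L * (norm b)\<^sup>2)" using hy2 P0 by (intro mult_left_mono) auto
    moreover have "L*(4*y + 4*L*(norm b)\<^sup>2 - 3) \<le> 0"
      using mult_mono[OF L1 hb2] L0 hy by (intro mult_nonneg_nonpos) auto
    moreover have "(norm w)\<^sup>2 - 4*P*L*(norm b)\<^sup>2 - 4*L = L*(4*y + 4*L*(norm b)\<^sup>2 - 3) - 4*(P*(L*(norm b)\<^sup>2))"
      unfolding norm_w by (simp add: algebra_simps power2_eq_square)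
    ultimately have "(norm w)\<^sup>2 - 4*P*L*(norm b)\<^sup>2 - 4*L \<le> - 4*P*y\<^sup>2" by linarith
    hence "((norm w)\<^sup>2 - 4*P*L*(norm b)\<^sup>2 - 4*L) / (4*P) \<le> - 4*P*y\<^sup>2 / (4*P)"
      using P0 by (intro divide_right_mono) auto
    thus ?thesis using P0 by (simp add: diff_divide_distrib)
  qed
  moreover have "\<beta> \<bullet> l = y + \<delta> \<bullet> l"
    by (simp add: \<delta>_def y_def b_def inner_diff_left inner_diff_right inner_commute)
  moreover have "(norm \<beta>)\<^sup>2 = (norm b)\<^sup>2 + 2 * (\<delta> \<bullet> b) + (norm \<delta>)\<^sup>2"
    by (simp add: \<delta>_def dot_square_norm[symmetric] inner_diff_left inner_diff_right inner_commute algebra_simps)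
  moreover have "\<delta> \<bullet> w = \<delta> \<bullet> l + 2*L*(\<delta> \<bullet> b)" by (simp add: w_def inner_add_right)
  ultimately show ?thesis using A completed_square by (simp add: P_def algebra_simps)
qed

lemma pot_step:
  fixes \<theta> l :: "'v::real_inner"
  assumes S2: "S2 > 0" and l1: "norm l \<le> 1"
  shows "pot (S2 + (norm l)\<^sup>2) (Q + (norm l)\<^sup>2 / (S2 + (norm l)\<^sup>2)) (\<theta> - l)
           \<le> pot S2 Q \<theta> - l \<bullet> pot_grad S2 Q \<theta>"
proof -
  define L where "L = (norm l)\<^sup>2"
  define y where "y = l \<bullet> huber_grad S2 \<theta>"
  have hy: "\<bar>y\<bar> \<le> 1/2"
    using Cauchy_Schwarz_ineq2[of l "huber_grad S2 \<theta>"] mult_mono[OF l1 norm_huber_grad_le[of S2 \<theta>, OF S2]]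
    by (simp add: y_def)
  have "pot (S2 + L) (Q + L / (S2 + L)) (\<theta> - l)
        = pot S2 Q \<theta> * exp (huber (S2 + L) (norm (\<theta> - l)) - huber S2 (norm \<theta>) - L / (S2 + L))"
    unfolding pot_def exp_add[symmetric] by (simp add: algebra_simps)
  also have "\<dots> \<le> pot S2 Q \<theta> * exp (- y - y\<^sup>2)"
    using huber_step[OF S2 l1, of \<theta>] by (intro mult_left_mono) (auto simp: pot_def L_def y_def)
  also have "\<dots> \<le> pot S2 Q \<theta> * (1 - y)"
    using exp_neg_le_one_minus[OF hy] by (intro mult_left_mono) (auto simp: pot_def)
  also have "\<dots> = pot S2 Q \<theta> - l \<bullet> pot_grad S2 Q \<theta>"
    by (simp add: pot_grad_def y_def algebra_simps)
  finally show ?thesis by (simp add: L_def)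
qed

section \<open>The conjugate \<open>psi\<close> and its Bregman divergence\<close>

lemma pot_ge_quadratic:
  assumes "S2 > 0"
  shows "exp (- S2/4 - Q) * t\<^sup>2 / 8 \<le> pot S2 Q (t::real)"
proof -
  have "t\<^sup>2/8 \<le> 1 + \<bar>t\<bar>/2 + (\<bar>t\<bar>/2)\<^sup>2 / 2" by (simp add: power2_eq_square)
  also have "\<dots> \<le> exp (\<bar>t\<bar>/2)" by (rule exp_lower_Taylor_quadratic) simp
  finally have "exp (- S2/4 - Q) * t\<^sup>2 / 8 \<le> exp (- S2/4 - Q) * exp (\<bar>t\<bar>/2)"
    by (simp add: mult_left_mono divide_le_eq mult.assoc[symmetric])
  also have "\<dots> = exp (1/2 * \<bar>t\<bar> - (1/2)\<^sup>2 * S2 - Q)"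
    by (simp add: exp_add[symmetric] power2_eq_square)
  also have "\<dots> \<le> pot S2 Q t"
    using huber_ge[of "1/2" "\<bar>t\<bar>" S2] assms by (simp add: pot_def)
  finally show ?thesis .
qed

lemma pot_conj_le:
  assumes "S2 > 0"
  shows "t * s - pot S2 Q (t::real) \<le> s\<^sup>2 * 2 * exp (S2/4 + Q)"
proof -
  define a where "a = exp (- S2/4 - Q) / 8"
  have a0: "a > 0" by (simp add: a_def)
  have "t * s - a*t\<^sup>2 \<le> s\<^sup>2 / (4*a)"
  proof -
    have "0 \<le> (2*a*t - s)\<^sup>2 / (4*a)" using a0 by simp
    also have "(2*a*t - s)\<^sup>2 / (4*a) = s\<^sup>2/(4*a) - (t * s - a*t\<^sup>2)"
      using a0 by (simp add: field_simps power2_eq_square)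
    finally show ?thesis by simp
  qed
  moreover have "a*t\<^sup>2 \<le> pot S2 Q t" using pot_ge_quadratic[OF assms, of Q t] by (simp add: a_def)
  moreover have "exp (S2/4 + Q) * exp (- S2/4 - Q) = 1" by (simp add: exp_add[symmetric])
  hence "s\<^sup>2 / (4*a) = s\<^sup>2 * 2 * exp (S2/4 + Q)" by (simp add: a_def field_simps)
  ultimately show ?thesis by linarith
qed

lemma bdd_above_pot_conj: "S2 > 0 \<Longrightarrow> bdd_above (range (\<lambda>t::real. t * s - pot S2 Q t))"
  using pot_conj_le by (intro bdd_aboveI2) blast

lemma psi_le: "S2 > 0 \<Longrightarrow> psi s (sqrt S2) Q \<le> s\<^sup>2 * 2 * exp (S2/4 + Q)"
  unfolding psi_eq_SUP_pot by (intro cSUP_least pot_conj_le) auto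

lemma fenchel_young_psi: "S2 > 0 \<Longrightarrow> t * s - pot S2 Q t \<le> psi s (sqrt S2) Q"
  unfolding psi_eq_SUP_pot by (rule cSUP_upper[OF UNIV_I bdd_above_pot_conj])

lemma psi_pot_grad:
  assumes "S2 > 0"
  shows "psi (pot_grad S2 Q t0) (sqrt S2) Q = t0 * pot_grad S2 Q t0 - pot S2 Q (t0::real)"
  unfolding psi_eq_SUP_pot[OF assms] image_def
proof (rule cSup_eq_maximum)
  fix y assume "y \<in> {y. \<exists>t\<in>UNIV. y = t * pot_grad S2 Q t0 - pot S2 Q t}"
  then obtain t where "y = t * pot_grad S2 Q t0 - pot S2 Q t" by blast
  with pot_convex[OF assms, of Q t0 t] show "y \<le> t0 * pot_grad S2 Q t0 - pot S2 Q t0"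
    by (simp add: algebra_simps)
qed blast

lemma psi_mono:
  assumes "0 < S2" "S2 \<le> S2'" "Q \<le> Q'"
  shows "psi s (sqrt S2) Q \<le> psi s (sqrt S2') Q'"
proof -
  have S2': "S2' > 0" using assms by simp
  have "pot S2' Q' t \<le> pot S2 Q t" for t :: real
    using huber_antimono[OF assms(1,2), of "\<bar>t\<bar>"] assms(3) by (simp add: pot_def)
  hence "(SUP t::real. t * s - pot S2 Q t) \<le> (SUP t::real. t * s - pot S2' Q' t)"
    by (intro cSUP_mono bdd_above_pot_conj[OF S2']) (auto intro: diff_left_mono)
  thus ?thesis using psi_eq_SUP_pot assms(1) S2' by simp
qed

lemma exp_ge_quadratic:
  fixes u :: real
  assumes "\<bar>u\<bar> \<le> 1/2"
  shows "1 + u + u\<^sup>2/4 \<le> exp u"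
proof -
  obtain \<tau> where \<tau>: "\<bar>\<tau>\<bar> \<le> \<bar>u\<bar>" "exp u = (\<Sum>m<2. u^m / fact m) + exp \<tau> / fact 2 * u^2"
    using Maclaurin_exp_le[of u 2] by blast
  have "1/2 \<le> 1 + (-1/2::real)" by simp
  also have "\<dots> \<le> exp (-1/2)" by (rule exp_ge_add_one_self)
  also have "\<dots> \<le> exp \<tau>" using \<tau>(1) assms by simp
  finally have "1/2/2 * u^2 \<le> exp \<tau> / 2 * u^2" by (intro mult_right_mono divide_right_mono) auto
  moreover have "exp u = 1 + u + exp \<tau> / 2 * u^2" using \<tau>(2) by (simp add: numeral_2_eq_2)
  ultimately show ?thesis by (simp add: power2_eq_square)
qed

definition pot_bregman :: "real \<Rightarrow> real \<Rightarrow> real \<Rightarrow> real \<Rightarrow> real" where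
  "pot_bregman S2 Q t0 w = pot S2 Q (t0 + w) - pot S2 Q t0 - pot_grad S2 Q t0 * w"

lemma pot_bregman_ge_local:
  assumes S2: "S2 \<ge> 1" and t0: "t0 \<ge> 0" and w: "\<bar>w\<bar> \<le> 1"
  shows "pot S2 Q t0 / (64*S2) * w\<^sup>2 \<le> pot_bregman S2 Q t0 w"
proof -
  have S2p: "S2 > 0" using S2 by simp
  define E0 where "E0 = pot S2 Q t0"
  define b where "b = huber_grad S2 t0"
  have E0p: "E0 > 0" by (simp add: E0_def pot_pos)
  have b0: "b \<ge> 0" using t0 S2p by (simp add: b_def huber_grad_def)
  have b1: "b \<le> 1/2" using norm_huber_grad_le[OF S2p, of t0] b0 by (simp add: b_def)
  have bregman_eq: "pot_bregman S2 Q t0 w = E0 * (exp (huber S2 \<bar>t0 + w\<bar> - huber S2 t0) - 1 - b * w)"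
    using t0 by (simp add: pot_bregman_def pot_grad_def pot_def E0_def b_def exp_diff field_simps)
  obtain c where c: "c \<ge> 1/(64*S2)"
    and exp_ge: "1 + b * w + c * w\<^sup>2 \<le> exp (huber S2 \<bar>t0 + w\<bar> - huber S2 t0)"
  proof (cases "b \<ge> 1/4")
    case True
    \<comment> \<open>in the linear regime of \<open>huber\<close> the curvature comes from \<open>exp\<close> alone\<close>
    have "b * w \<le> huber S2 \<bar>t0 + w\<bar> - huber S2 t0"
      using huber_tangent[OF S2p, of t0 "t0 + w"] t0 by (simp add: b_def)
    moreover have "\<bar>b * w\<bar> \<le> 1/2" using mult_mono[OF b1 w] b0 by (simp add: abs_mult)
    ultimately have "1 + b * w + b\<^sup>2/4 * w\<^sup>2 \<le> exp (huber S2 \<bar>t0 + w\<bar> - huber S2 t0)"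
      using exp_ge_quadratic[of "b * w"] by (auto simp: power_mult_distrib intro: order_trans)
    moreover have "1/(64*S2) \<le> b\<^sup>2/4"
    proof -
      have "1/(64*S2) \<le> 1/64" using S2 by (simp add: frac_le)
      also have "\<dots> \<le> b\<^sup>2/4" using power_mono[OF True, of 2] by (simp add: power2_eq_square)
      finally show ?thesis .
    qed
    ultimately show ?thesis using that by blast
  next
    case False
    \<comment> \<open>in the quadratic regime the shifted dual point \<open>b + w/(4*S2)\<close> is still admissible\<close>
    have tS: "t0 \<le> S2" using False t0 S2p by (auto simp: b_def huber_grad_def split: if_splits)
    hence bv: "b = t0 / (2*S2)" using t0 by (simp add: b_def huber_grad_def)
    have "\<bar>w\<bar>/(4*S2) \<le> 1/4" using w S2 by (simp add: field_simps)
    moreover have "\<bar>b + w/(4*S2)\<bar> \<le> b + \<bar>w\<bar>/(4*S2)"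
      using b0 S2p abs_triangle_ineq[of b "w/(4*S2)"] by (simp add: abs_divide)
    ultimately have "norm (b + w/(4*S2)) \<le> 1/2" using False by simp
    from huber_ge_inner[OF this S2p, of "t0 + w"]
    have "(b + w/(4*S2)) * (t0 + w) - (b + w/(4*S2))\<^sup>2 * S2 \<le> huber S2 \<bar>t0 + w\<bar>"
      by (simp add: power2_abs)
    moreover have "(b + w/(4*S2)) * (t0 + w) - (b + w/(4*S2))\<^sup>2 * S2 = huber S2 t0 + b * w + 3/(16*S2) * w\<^sup>2"
      using tS S2p by (simp add: huber_def bv field_simps power2_eq_square)
    ultimately have "b * w + 3/(16*S2) * w\<^sup>2 \<le> huber S2 \<bar>t0 + w\<bar> - huber S2 t0" by simp
    hence "1 + b * w + 3/(16*S2) * w\<^sup>2 \<le> exp (huber S2 \<bar>t0 + w\<bar> - huber S2 t0)"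
      using exp_ge_add_one_self[of "b * w + 3/(16*S2) * w\<^sup>2"] exp_mono by (smt (verit))
    moreover have "1/(64*S2) \<le> 3/(16*S2)" using S2p by (simp add: frac_le)
    ultimately show ?thesis using that by blast
  qed
  have "E0 * (c * w\<^sup>2) \<le> pot_bregman S2 Q t0 w"
    unfolding bregman_eq using exp_ge E0p by (intro mult_left_mono) auto
  moreover have "E0 / (64*S2) * w\<^sup>2 \<le> E0 * (c * w\<^sup>2)"
    using mult_left_mono[OF mult_right_mono[OF c, of "w\<^sup>2"], of E0] E0p by simp
  ultimately show ?thesis by (simp add: E0_def)
qed

lemma pot_bregman_superlinear:
  assumes S2: "S2 > 0" and \<tau>: "\<tau> \<ge> 1"
  shows "\<tau> * pot_bregman S2 Q t0 w \<le> pot_bregman S2 Q t0 (\<tau> * w)"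
proof -
  define gp where "gp = pot_grad S2 Q (t0 + w)"
  have "pot S2 Q (t0 + w) + gp * ((\<tau> - 1)*w) \<le> pot S2 Q (t0 + \<tau>*w)"
    using pot_convex[OF S2, of Q "t0 + w" "t0 + \<tau>*w"] by (simp add: gp_def algebra_simps)
  moreover have "pot_bregman S2 Q t0 w \<le> gp * w - pot_grad S2 Q t0 * w"
    using pot_convex[OF S2, of Q "t0 + w" t0] by (simp add: gp_def pot_bregman_def algebra_simps)
  hence "(\<tau> - 1) * pot_bregman S2 Q t0 w \<le> (\<tau> - 1) * (gp * w - pot_grad S2 Q t0 * w)"
    using \<tau> by (intro mult_left_mono) auto
  ultimately show ?thesis by (simp add: pot_bregman_def algebra_simps)
qed

lemma pot_bregman_ge_linear:
  assumes S2: "S2 \<ge> 1" and t0: "t0 \<ge> 0" and w: "\<bar>w\<bar> \<ge> 1"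
  shows "pot S2 Q t0 / (64*S2) * \<bar>w\<bar> \<le> pot_bregman S2 Q t0 w"
proof -
  define u where "u = sgn w"
  have u1: "\<bar>u\<bar> = 1" using w by (simp add: u_def abs_sgn_eq)
  have "pot S2 Q t0 / (64*S2) \<le> pot_bregman S2 Q t0 u"
    using pot_bregman_ge_local[OF S2 t0, of u Q] u1 by (simp add: power2_eq_square abs_mult_self_eq[of u, symmetric])
  hence "pot S2 Q t0 / (64*S2) * \<bar>w\<bar> \<le> pot_bregman S2 Q t0 u * \<bar>w\<bar>"
    by (rule mult_right_mono) simp
  also have "\<dots> \<le> pot_bregman S2 Q t0 (\<bar>w\<bar> * u)"
    using pot_bregman_superlinear[of S2 "\<bar>w\<bar>" Q t0 u] S2 w by (simp add: mult.commute)
  finally show ?thesis by (simp add: u_def abs_mult_sgn)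
qed

lemma has_derivative_of_quadratic_remainder:
  fixes f :: "'a::real_normed_vector \<Rightarrow> real"
  assumes L: "bounded_linear L" and c: "c > 0" and K: "K > 0"
    and remainder: "\<And>y. norm (y - y0) \<le> c \<Longrightarrow> \<bar>f y - f y0 - L (y - y0)\<bar> \<le> K * (norm (y - y0))\<^sup>2"
  shows "(f has_derivative L) (at y0)"
  unfolding has_derivative_at_alt
proof (intro conjI allI impI L)
  fix e :: real assume e: "e > 0"
  show "\<exists>d>0. \<forall>y. norm (y - y0) < d \<longrightarrow> norm (f y - f y0 - L (y - y0)) \<le> e * norm (y - y0)"
  proof (intro exI[of _ "min c (e/K)"] conjI allI impI)
    show "min c (e/K) > 0" using c e K by simp
    fix y assume y: "norm (y - y0) < min c (e/K)"
    have "\<bar>f y - f y0 - L (y - y0)\<bar> \<le> (K * norm (y - y0)) * norm (y - y0)"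
      using remainder y by (simp add: power2_eq_square mult.assoc)
    also have "\<dots> \<le> e * norm (y - y0)"
      using y K by (intro mult_right_mono) (simp_all add: field_simps)
    finally show "norm (f y - f y0 - L (y - y0)) \<le> e * norm (y - y0)" by simp
  qed
qed

text \<open>Since the scalar potential is locally strongly convex at \<open>t0\<close> (quadratic lower bound on
  its Bregman divergence near \<open>t0\<close>, linear one far away), its conjugate \<open>psi\<close> has a quadratic
  upper bound around \<open>pot_grad S2 Q t0\<close>, with slope \<open>t0\<close>.\<close>
lemma psi_local_bounds:
  fixes Q :: real
  assumes S2: "S2 \<ge> 1" and t0: "t0 \<ge> 0"
  defines "c \<equiv> pot S2 Q t0 / (64*S2)" and "s0 \<equiv> pot_grad S2 Q t0"
  assumes h: "\<bar>h\<bar> \<le> c"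
  shows "t0 * h \<le> psi (s0 + h) (sqrt S2) Q - psi s0 (sqrt S2) Q"
    and "psi (s0 + h) (sqrt S2) Q - psi s0 (sqrt S2) Q - t0 * h \<le> h\<^sup>2 / (4*c)"
proof -
  have S2p: "S2 > 0" using S2 by simp
  have c0: "c > 0" using S2 by (simp add: c_def pot_pos)
  have psi_s0: "psi s0 (sqrt S2) Q = t0 * s0 - pot S2 Q t0"
    using psi_pot_grad[OF S2p] by (simp add: s0_def)
  have "t0 * (s0 + h) - pot S2 Q t0 \<le> psi (s0 + h) (sqrt S2) Q" by (rule fenchel_young_psi[OF S2p])
  thus "t0 * h \<le> psi (s0 + h) (sqrt S2) Q - psi s0 (sqrt S2) Q" using psi_s0 by (simp add: algebra_simps)
  have "t * (s0 + h) - pot S2 Q t \<le> t0 * s0 - pot S2 Q t0 + t0 * h + h\<^sup>2 / (4*c)" for t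
  proof -
    define w where "w = t - t0"
    have "w * h - pot_bregman S2 Q t0 w \<le> h\<^sup>2 / (4*c)"
    proof (cases "\<bar>w\<bar> \<le> 1")
      case True
      have "0 \<le> (2*c*w - h)\<^sup>2 / (4*c)" using c0 by simp
      also have "\<dots> = h\<^sup>2 / (4*c) - (w * h - c * w\<^sup>2)" using c0 by (simp add: field_simps power2_eq_square)
      finally show ?thesis using pot_bregman_ge_local[OF S2 t0 True, of Q] by (simp add: c_def)
    next
      case False
      have "w * h \<le> \<bar>w\<bar> * c" using h mult_left_mono[OF h, of "\<bar>w\<bar>"] by (simp add: abs_mult[symmetric])
      also have "\<dots> \<le> pot_bregman S2 Q t0 w"
        using pot_bregman_ge_linear[OF S2 t0, of w Q] False by (simp add: c_def mult.commute)
      moreover have "0 \<le> h\<^sup>2 / (4*c)" using c0 by simp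
      ultimately show ?thesis by linarith
    qed
    thus ?thesis by (simp add: w_def pot_bregman_def s0_def algebra_simps)
  qed
  hence "psi (s0 + h) (sqrt S2) Q \<le> t0 * s0 - pot S2 Q t0 + t0 * h + h\<^sup>2 / (4*c)"
    unfolding psi_eq_SUP_pot[OF S2p] by (intro cSUP_least) auto
  thus "psi (s0 + h) (sqrt S2) Q - psi s0 (sqrt S2) Q - t0 * h \<le> h\<^sup>2 / (4*c)" using psi_s0 by simp
qed

lemma psi_has_real_derivative:
  assumes S2: "S2 \<ge> 1" and t0: "t0 \<ge> 0"
  shows "((\<lambda>s. psi s (sqrt S2) Q) has_real_derivative t0) (at (pot_grad S2 Q t0))"
proof -
  define c where "c = pot S2 Q t0 / (64*S2)"
  have c0: "c > 0" using S2 by (simp add: c_def pot_pos)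
  have "((\<lambda>s. psi s (sqrt S2) Q) has_derivative (\<lambda>h. t0 * h)) (at (pot_grad S2 Q t0))"
  proof (rule has_derivative_of_quadratic_remainder[OF bounded_linear_mult_right c0])
    show "1/(4*c) > 0" using c0 by simp
    fix y assume "norm (y - pot_grad S2 Q t0) \<le> c"
    from psi_local_bounds[OF S2 t0, of "y - pot_grad S2 Q t0" Q, folded c_def] this
    show "\<bar>psi y (sqrt S2) Q - psi (pot_grad S2 Q t0) (sqrt S2) Q - t0 * (y - pot_grad S2 Q t0)\<bar>
          \<le> 1/(4*c) * (norm (y - pot_grad S2 Q t0))\<^sup>2"
      by (simp add: abs_le_iff)
  qed
  thus ?thesis by (simp add: has_field_derivative_def mult_commute_abs)
qed

lemma psi_norm_has_derivative:
  fixes \<theta> :: "'v::real_inner"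
  assumes S2: "S2 \<ge> 1"
  shows "((\<lambda>y. psi (norm y) (sqrt S2) Q) has_derivative (\<lambda>h. \<theta> \<bullet> h)) (at (pot_grad S2 Q \<theta>))"
proof (cases "\<theta> = 0")
  case True
  define c where "c = pot S2 Q (0::real) / (64*S2)"
  have c0: "c > 0" using S2 by (simp add: c_def pot_pos)
  have "((\<lambda>y. psi (norm y) (sqrt S2) Q) has_derivative (\<lambda>h. 0)) (at (0::'v))"
  proof (rule has_derivative_of_quadratic_remainder[OF bounded_linear_zero c0])
    show "1/(4*c) > 0" using c0 by simp
    fix y :: 'v assume "norm (y - 0) \<le> c"
    moreover have "pot_grad S2 Q (0::real) = 0" by (simp add: pot_grad_def huber_grad_def)
    ultimately show "\<bar>psi (norm y) (sqrt S2) Q - psi (norm (0::'v)) (sqrt S2) Q - 0\<bar> \<le> 1/(4*c) * (norm (y - 0))\<^sup>2"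
      using psi_local_bounds[OF S2 order_refl, of "norm y" Q, folded c_def] by simp
  qed
  thus ?thesis by (simp add: True pot_grad_def huber_grad_def)
next
  case False
  have S2p: "S2 > 0" using S2 by simp
  define y0 where "y0 = pot_grad S2 Q \<theta>"
  define k where "k = pot S2 Q \<theta> * (if norm \<theta> \<le> S2 then 1/(2*S2) else 1/(2*norm \<theta>))"
  have k0: "k > 0" using S2p False by (simp add: k_def pot_pos)
  have y0k: "y0 = k *\<^sub>R \<theta>" by (simp add: y0_def pot_grad_def huber_grad_def k_def)
  have "(norm has_derivative (\<lambda>h. h \<bullet> sgn y0)) (at y0)"
    using k0 False by (intro has_derivative_norm) (simp add: y0k)
  moreover have "((\<lambda>s. psi s (sqrt S2) Q) has_derivative (\<lambda>h. norm \<theta> * h)) (at (norm y0))"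
    using psi_has_real_derivative[OF S2, of "norm \<theta>" Q]
    by (simp add: has_field_derivative_def y0_def norm_pot_grad[OF S2p])
  ultimately have "((\<lambda>y. psi (norm y) (sqrt S2) Q) has_derivative (\<lambda>h. norm \<theta> * (h \<bullet> sgn y0))) (at y0)"
    by (rule has_derivative_compose)
  moreover have "norm \<theta> * (h \<bullet> sgn y0) = \<theta> \<bullet> h" for h
    using k0 False by (simp add: y0k sgn_div_norm inner_commute field_simps)
  ultimately show ?thesis by (simp add: y0_def)
qed

lemma bregman_psi_norm:
  fixes \<theta> x :: "'v::euclidean_space"
  assumes S2: "S2 \<ge> 1"
  shows "bregman (\<lambda>y. psi (norm y) (sqrt S2) Q) x (pot_grad S2 Q \<theta>)
       = psi (norm x) (sqrt S2) Q + pot S2 Q \<theta> - \<theta> \<bullet> x"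
proof -
  have S2p: "S2 > 0" using S2 by simp
  let ?f = "\<lambda>y. psi (norm y) (sqrt S2) Q"
  have d: "(?f has_derivative (\<lambda>h. \<theta> \<bullet> h)) (at (pot_grad S2 Q \<theta>))" by (rule psi_norm_has_derivative[OF S2])
  have grad: "(THE v. (?f has_derivative (\<lambda>h. v \<bullet> h)) (at (pot_grad S2 Q \<theta>))) = \<theta>"
  proof (rule the_equality)
    show "(?f has_derivative (\<lambda>h. \<theta> \<bullet> h)) (at (pot_grad S2 Q \<theta>))" by (rule d)
    fix v assume "(?f has_derivative (\<lambda>h. v \<bullet> h)) (at (pot_grad S2 Q \<theta>))"
    hence "(\<lambda>h. v \<bullet> h) = (\<lambda>h. \<theta> \<bullet> h)" using has_derivative_unique d by blast
    hence "(v - \<theta>) \<bullet> (v - \<theta>) = 0" by (metis inner_diff_left diff_self)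
    thus "v = \<theta>" by simp
  qed
  have "?f (pot_grad S2 Q \<theta>) = norm \<theta> * pot_grad S2 Q (norm \<theta>) - pot S2 Q (norm \<theta>)"
    using psi_pot_grad[OF S2p] by (simp add: norm_pot_grad[OF S2p])
  also have "\<dots> = \<theta> \<bullet> pot_grad S2 Q \<theta> - pot S2 Q \<theta>"
    by (simp add: inner_pot_grad[OF S2p] norm_pot_grad[OF S2p] pot_norm)
  finally show ?thesis unfolding bregman_def grad by (simp add: inner_diff_right)
qed

section \<open>The state of Algorithm 1\<close>

definition alg_S2 :: "(nat \<Rightarrow> 'v::real_normed_vector) \<Rightarrow> (nat \<Rightarrow> real) \<Rightarrow> nat \<Rightarrow> real" where
  "alg_S2 gg ee t = fst (alg_state gg ee t)"

definition alg_Q :: "(nat \<Rightarrow> 'v::real_normed_vector) \<Rightarrow> (nat \<Rightarrow> real) \<Rightarrow> nat \<Rightarrow> real" where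
  "alg_Q gg ee t = fst (snd (alg_state gg ee t))"

definition alg_theta :: "(nat \<Rightarrow> 'v::real_normed_vector) \<Rightarrow> (nat \<Rightarrow> real) \<Rightarrow> nat \<Rightarrow> 'v" where
  "alg_theta gg ee t = snd (snd (alg_state gg ee t))"

definition alg_loss :: "(nat \<Rightarrow> 'v::real_normed_vector) \<Rightarrow> (nat \<Rightarrow> real) \<Rightarrow> nat \<Rightarrow> 'v" where
  "alg_loss gg ee t = ee t *\<^sub>R gg t"

lemma alg_state_eq: "alg_state gg ee t = (alg_S2 gg ee t, alg_Q gg ee t, alg_theta gg ee t)"
  by (simp add: alg_S2_def alg_Q_def alg_theta_def)

lemma alg_0 [simp]: "alg_S2 gg ee 0 = 4" "alg_Q gg ee 0 = 0" "alg_theta gg ee 0 = 0"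
  by (simp_all add: alg_S2_def alg_Q_def alg_theta_def)

lemma alg_Suc:
  "alg_S2 gg ee (Suc t) = alg_S2 gg ee t + (norm (alg_loss gg ee (Suc t)))\<^sup>2"
  "alg_Q gg ee (Suc t) = alg_Q gg ee t + (norm (alg_loss gg ee (Suc t)))\<^sup>2 / alg_S2 gg ee (Suc t)"
  "alg_theta gg ee (Suc t) = alg_theta gg ee t - alg_loss gg ee (Suc t)"
  unfolding alg_S2_def alg_Q_def alg_theta_def
  by (simp_all add: alg_state_eq[of gg ee t] Let_def alg_loss_def)

lemma alg_S2_ge: "alg_S2 gg ee t \<ge> 4"
  by (induction t) (auto simp: alg_Suc intro: add_increasing2)

lemma alg_S2_pos: "alg_S2 gg ee t > 0"
  using alg_S2_ge[of gg ee t] by simp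

lemma alg_Q_nonneg: "alg_Q gg ee t \<ge> 0"
  by (induction t) (auto simp: alg_Suc alg_S2_pos less_imp_le)

lemma alg_S2_eq_sum: "alg_S2 gg ee t = 4 + (\<Sum>i<t. (norm (alg_loss gg ee (Suc i)))\<^sup>2)"
  by (induction t) (simp_all add: alg_Suc)

lemma alg_Q_le_sum: "alg_Q gg ee t \<le> (\<Sum>i<t. (norm (alg_loss gg ee (Suc i)))\<^sup>2) / 4"
proof (induction t)
  case (Suc t)
  have "(norm (alg_loss gg ee (Suc t)))\<^sup>2 / alg_S2 gg ee (Suc t) \<le> (norm (alg_loss gg ee (Suc t)))\<^sup>2 / 4"
    using alg_S2_ge[of gg ee "Suc t"] by (intro divide_left_mono) auto
  thus ?case using Suc.IH by (simp only: alg_Suc(2) sum.lessThan_Suc add_divide_distrib)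
qed simp

lemma norm_alg_theta_le: "norm (alg_theta gg ee t) \<le> (\<Sum>i<t. norm (alg_loss gg ee (Suc i)))"
proof (induction t)
  case (Suc t)
  have "norm (alg_theta gg ee (Suc t)) \<le> norm (alg_theta gg ee t) + norm (alg_loss gg ee (Suc t))"
    by (simp add: alg_Suc norm_triangle_ineq4)
  thus ?case using Suc.IH by simp
qed simp

lemma alg_x_eq_pot_grad:
  "alg_x gg ee t = pot_grad (alg_S2 gg ee (t-1)) (alg_Q gg ee (t-1)) (alg_theta gg ee (t-1))"
  using alg_S2_pos[of gg ee "t-1"]
  by (simp add: alg_x_def alg_state_eq pot_grad_def pot_def huber_grad_def huber_def)

lemma alg_phi_eq: "alg_phi gg ee t y = psi (norm y) (sqrt (alg_S2 gg ee (t-1))) (alg_Q gg ee (t-1))"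
  by (simp add: alg_phi_def alg_state_eq)

text \<open>The dual part \<open>pot(\<theta>) - \<theta> \<bullet> x\<close> of the Bregman divergence of Algorithm 1.\<close>
definition alg_dual :: "(nat \<Rightarrow> 'v::real_inner) \<Rightarrow> (nat \<Rightarrow> real) \<Rightarrow> 'v \<Rightarrow> nat \<Rightarrow> real" where
  "alg_dual gg ee x t = pot (alg_S2 gg ee t) (alg_Q gg ee t) (alg_theta gg ee t) - alg_theta gg ee t \<bullet> x"

lemma bregman_alg_eq:
  fixes gg :: "nat \<Rightarrow> 'v::euclidean_space"
  shows "bregman (alg_phi gg ee t) x (alg_x gg ee t) = alg_phi gg ee t x + alg_dual gg ee x (t-1)"
proof -
  have "alg_S2 gg ee (t-1) \<ge> 1" using alg_S2_ge[of gg ee "t-1"] by simp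
  thus ?thesis
    unfolding alg_x_eq_pot_grad alg_phi_eq[abs_def] alg_dual_def by (simp add: bregman_psi_norm)
qed

lemma alg_dual_step:
  fixes gg :: "nat \<Rightarrow> 'v::real_inner"
  assumes "norm (alg_loss gg ee (Suc t)) \<le> 1"
  shows "alg_dual gg ee x (Suc t) \<le> alg_dual gg ee x t - alg_loss gg ee (Suc t) \<bullet> (alg_x gg ee (Suc t) - x)"
  using pot_step[OF alg_S2_pos assms, of gg ee t "alg_Q gg ee t" "alg_theta gg ee t"]
  by (simp add: alg_dual_def alg_Suc alg_x_eq_pot_grad inner_diff_left inner_diff_right)

lemma alg_dual_ge: "- alg_phi gg ee (Suc t) x \<le> alg_dual gg ee x t"
  using fenchel_young_psi[OF alg_S2_pos, of "norm (alg_theta gg ee t)" "norm x" gg ee t "alg_Q gg ee t"]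
    norm_cauchy_schwarz[of "alg_theta gg ee t" x]
  by (simp add: alg_phi_eq alg_dual_def pot_norm)

lemma alg_phi_mono: "alg_phi gg ee (Suc t) x \<le> alg_phi gg ee (Suc (Suc t)) x"
  unfolding alg_phi_eq by (intro psi_mono alg_S2_pos) (simp_all add: alg_Suc alg_S2_pos less_imp_le)

context
  fixes gg :: "nat \<Rightarrow> 'v::real_inner" and ee :: "nat \<Rightarrow> real" and \<gamma> :: real
  assumes loss_le_1: "\<And>t. t \<ge> 1 \<Longrightarrow> norm (alg_loss gg ee t) \<le> 1"
    and loss_sq_sum: "\<And>t. (\<Sum>i<t. (norm (alg_loss gg ee (Suc i)))\<^sup>2) \<le> \<gamma>"
begin

lemma norm_alg_theta_le_bounded: "norm (alg_theta gg ee t) \<le> t"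
proof -
  have "norm (alg_theta gg ee t) \<le> (\<Sum>i<t. norm (alg_loss gg ee (Suc i)))" by (rule norm_alg_theta_le)
  also have "\<dots> \<le> (\<Sum>i<t. 1)" by (intro sum_mono loss_le_1) simp
  finally show ?thesis by simp
qed

lemma alg_pot_le: "pot (alg_S2 gg ee t) (alg_Q gg ee t) (alg_theta gg ee t) \<le> exp ((real t)\<^sup>2 + t)"
proof -
  let ?r = "norm (alg_theta gg ee t)"
  have "huber (alg_S2 gg ee t) ?r \<le> ?r\<^sup>2 + ?r"
  proof (cases "?r \<le> alg_S2 gg ee t")
    case True
    have "?r\<^sup>2 / (4 * alg_S2 gg ee t) \<le> ?r\<^sup>2 / 1" using alg_S2_ge[of gg ee t] by (intro divide_left_mono) auto
    thus ?thesis using True by (auto simp: huber_def intro: add_increasing2)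
  next
    case False
    have "?r/2 - alg_S2 gg ee t/4 \<le> ?r\<^sup>2 + ?r" using alg_S2_pos[of gg ee t] zero_le_power2[of ?r] norm_ge_zero[of "alg_theta gg ee t"] by linarith
    thus ?thesis using False by (simp add: huber_def)
  qed
  also have "\<dots> \<le> (real t)\<^sup>2 + t"
    using norm_alg_theta_le_bounded[of t] by (intro add_mono power_mono) auto
  finally show ?thesis using alg_Q_nonneg[of gg ee t] by (simp add: pot_def)
qed

lemma norm_alg_x_le: "norm (alg_x gg ee (Suc t)) \<le> exp ((real t)\<^sup>2 + t)"
  using order_trans[OF norm_pot_grad_le[OF alg_S2_pos] alg_pot_le[of t]] by (simp add: alg_x_eq_pot_grad)

lemma alg_dual_le: "alg_dual gg ee x t \<le> exp ((real t)\<^sup>2 + t) + t * norm x"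
proof -
  have "- (alg_theta gg ee t \<bullet> x) \<le> norm (alg_theta gg ee t) * norm x"
    using norm_cauchy_schwarz[of "- alg_theta gg ee t" x] by simp
  also have "\<dots> \<le> t * norm x" using norm_alg_theta_le_bounded[of t] by (intro mult_right_mono) auto
  finally show ?thesis using alg_pot_le[of t] by (simp add: alg_dual_def)
qed

lemma alg_phi_le: "alg_phi gg ee (Suc t) x \<le> 2 * (norm x)\<^sup>2 * exp (1 + \<gamma>/2)"
proof -
  have "alg_phi gg ee (Suc t) x \<le> (norm x)\<^sup>2 * 2 * exp (alg_S2 gg ee t / 4 + alg_Q gg ee t)"
    unfolding alg_phi_eq by (simp add: psi_le alg_S2_pos)
  also have "\<dots> \<le> (norm x)\<^sup>2 * 2 * exp (1 + \<gamma>/2)"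
  proof (intro mult_left_mono exp_mono)
    show "alg_S2 gg ee t / 4 + alg_Q gg ee t \<le> 1 + \<gamma>/2"
      using loss_sq_sum[of t] alg_Q_le_sum[of gg ee t] unfolding alg_S2_eq_sum add_divide_distrib by linarith
  qed simp
  finally show ?thesis by simp
qed

lemma alg_dual_ge_bounded: "- (2 * (norm x)\<^sup>2 * exp (1 + \<gamma>/2)) \<le> alg_dual gg ee x t"
  using alg_dual_ge[of gg ee t x] alg_phi_le[of t x] by linarith

lemma convergent_alg_phi: "convergent (\<lambda>t. alg_phi gg ee (Suc t) x)"
proof (rule Bseq_monoseq_convergent)
  have "incseq (\<lambda>t. alg_phi gg ee (Suc t) x)" by (rule incseq_SucI) (rule alg_phi_mono)
  thus "monoseq (\<lambda>t. alg_phi gg ee (Suc t) x)" by (rule incseq_imp_monoseq)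
  show "Bseq (\<lambda>t. alg_phi gg ee (Suc t) x)"
  proof (rule BseqI')
    fix t
    have "alg_phi gg ee (Suc 0) x \<le> alg_phi gg ee (Suc t) x" using incseqD[OF \<open>incseq _\<close>, of 0 t] by simp
    with alg_phi_le[of t x]
    show "norm (alg_phi gg ee (Suc t) x) \<le> max (2 * (norm x)\<^sup>2 * exp (1 + \<gamma>/2)) \<bar>alg_phi gg ee (Suc 0) x\<bar>"
      by auto
  qed
qed

end

section \<open>Measurability\<close>

lemma borel_measurable_pot [measurable]:
  fixes S2 Q :: "'a \<Rightarrow> real" and v :: "'a \<Rightarrow> 'v::euclidean_space"
  assumes [measurable]: "S2 \<in> borel_measurable N" "Q \<in> borel_measurable N" "v \<in> borel_measurable N"
  shows "(\<lambda>\<omega>. pot (S2 \<omega>) (Q \<omega>) (v \<omega>)) \<in> borel_measurable N"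
  unfolding pot_def huber_def by measurable

lemma borel_measurable_pot_grad [measurable]:
  fixes S2 Q :: "'a \<Rightarrow> real" and v :: "'a \<Rightarrow> 'v::euclidean_space"
  assumes [measurable]: "S2 \<in> borel_measurable N" "Q \<in> borel_measurable N" "v \<in> borel_measurable N"
  shows "(\<lambda>\<omega>. pot_grad (S2 \<omega>) (Q \<omega>) (v \<omega>)) \<in> borel_measurable N"
  unfolding pot_grad_def huber_grad_def by measurable

lemma SUP_UNIV_eq_SUP_Rats:
  fixes f :: "real \<Rightarrow> real"
  assumes c: "continuous_on UNIV f" and b: "bdd_above (range f)"
  shows "(SUP t. f t) = (SUP t\<in>\<rat>. f t)"
proof (rule antisym)
  have bq: "bdd_above (f ` \<rat>)" using b by (meson bdd_above_mono image_mono subset_UNIV)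
  show "(SUP t\<in>\<rat>. f t) \<le> (SUP t. f t)" by (rule cSUP_subset_mono) (use b Rats_0 in auto)
  have "f ` closure \<rat> \<subseteq> {..(SUP t\<in>\<rat>. f t)}"
    by (rule image_closure_subset) (use c bq in \<open>auto intro: continuous_on_subset cSUP_upper\<close>)
  thus "(SUP t. f t) \<le> (SUP t\<in>\<rat>. f t)" by (intro cSUP_least) (auto simp: Rats_closure_real)
qed

lemma borel_measurable_psi [measurable]:
  fixes S2 Q :: "'a \<Rightarrow> real"
  assumes [measurable]: "S2 \<in> borel_measurable N" "Q \<in> borel_measurable N"
    and S2_pos: "\<And>\<omega>. S2 \<omega> > 0"
  shows "(\<lambda>\<omega>. psi s (sqrt (S2 \<omega>)) (Q \<omega>)) \<in> borel_measurable N"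
proof -
  have "psi s (sqrt (S2 \<omega>)) (Q \<omega>) = (SUP t\<in>\<rat>. t * s - pot (S2 \<omega>) (Q \<omega>) t)" for \<omega>
  proof -
    have huber_eq: "huber (S2 \<omega>) r = (r\<^sup>2 - (max (r - S2 \<omega>) 0)\<^sup>2) / (4 * S2 \<omega>)" for r
      using S2_pos[of \<omega>] by (auto simp: huber_def max_def field_simps power2_eq_square)
    have "continuous_on UNIV (\<lambda>t::real. t * s - pot (S2 \<omega>) (Q \<omega>) t)"
      unfolding pot_def huber_eq by (intro continuous_intros) (use S2_pos[of \<omega>] in auto)
    thus ?thesis
      by (simp add: psi_eq_SUP_pot S2_pos SUP_UNIV_eq_SUP_Rats bdd_above_pot_conj)
  qed
  moreover have "bdd_above ((\<lambda>t. t * s - pot (S2 \<omega>) (Q \<omega>) t) ` \<rat>)" for \<omega>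
    using bdd_above_pot_conj[OF S2_pos, of s \<omega> "Q \<omega>"] by (meson bdd_above_mono image_mono subset_UNIV)
  ultimately show ?thesis by (simp add: borel_measurable_cSUP countable_rat)
qed

lemma measurable_alg_state:
  fixes g :: "nat \<Rightarrow> 'a \<Rightarrow> 'v::euclidean_space" and eta :: "nat \<Rightarrow> 'a \<Rightarrow> real"
  assumes "\<And>i. 1 \<le> i \<Longrightarrow> i \<le> t \<Longrightarrow> g i \<in> borel_measurable N"
    and "\<And>i. 1 \<le> i \<Longrightarrow> i \<le> t \<Longrightarrow> eta i \<in> borel_measurable N"
  shows "(\<lambda>\<omega>. alg_S2 (\<lambda>s. g s \<omega>) (\<lambda>s. eta s \<omega>) t) \<in> borel_measurable N"
    and "(\<lambda>\<omega>. alg_Q (\<lambda>s. g s \<omega>) (\<lambda>s. eta s \<omega>) t) \<in> borel_measurable N"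
    and "(\<lambda>\<omega>. alg_theta (\<lambda>s. g s \<omega>) (\<lambda>s. eta s \<omega>) t) \<in> borel_measurable N"
proof -
  have "(\<lambda>\<omega>. alg_S2 (\<lambda>s. g s \<omega>) (\<lambda>s. eta s \<omega>) t) \<in> borel_measurable N \<and>
        (\<lambda>\<omega>. alg_Q (\<lambda>s. g s \<omega>) (\<lambda>s. eta s \<omega>) t) \<in> borel_measurable N \<and>
        (\<lambda>\<omega>. alg_theta (\<lambda>s. g s \<omega>) (\<lambda>s. eta s \<omega>) t) \<in> borel_measurable N"
    using assms
  proof (induction t)
    case (Suc t)
    then have [measurable]:
        "(\<lambda>\<omega>. alg_S2 (\<lambda>s. g s \<omega>) (\<lambda>s. eta s \<omega>) t) \<in> borel_measurable N"
        "(\<lambda>\<omega>. alg_Q (\<lambda>s. g s \<omega>) (\<lambda>s. eta s \<omega>) t) \<in> borel_measurable N"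
        "(\<lambda>\<omega>. alg_theta (\<lambda>s. g s \<omega>) (\<lambda>s. eta s \<omega>) t) \<in> borel_measurable N"
        "g (Suc t) \<in> borel_measurable N" "eta (Suc t) \<in> borel_measurable N"
      by auto
    show ?case unfolding alg_Suc alg_loss_def by measurable
  qed simp
  thus "(\<lambda>\<omega>. alg_S2 (\<lambda>s. g s \<omega>) (\<lambda>s. eta s \<omega>) t) \<in> borel_measurable N"
    and "(\<lambda>\<omega>. alg_Q (\<lambda>s. g s \<omega>) (\<lambda>s. eta s \<omega>) t) \<in> borel_measurable N"
    and "(\<lambda>\<omega>. alg_theta (\<lambda>s. g s \<omega>) (\<lambda>s. eta s \<omega>) t) \<in> borel_measurable N"
    by auto
qed

lemma space_alg_filtration [simp]: "space (alg_filtration M x g t) = space M"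
  unfolding alg_filtration_def by (rule space_measure_of_conv)

lemma sets_alg_filtration: "sets (alg_filtration M x g t) = sigma_sets (space M)
     ((\<Union>i\<in>{1..t}. {x i -` A \<inter> space M | A. A \<in> sets borel}) \<union>
      (\<Union>i\<in>{1..<t}. {g i -` A \<inter> space M | A. A \<in> sets borel}))"
  unfolding alg_filtration_def by (rule sets_measure_of) auto

lemma subalgebra_alg_filtration:
  fixes x g :: "nat \<Rightarrow> 'a \<Rightarrow> 'v::euclidean_space"
  assumes "\<And>i. 1 \<le> i \<Longrightarrow> i \<le> t \<Longrightarrow> x i \<in> borel_measurable M"
    and "\<And>i. 1 \<le> i \<Longrightarrow> i < t \<Longrightarrow> g i \<in> borel_measurable M"
  shows "subalgebra M (alg_filtration M x g t)"
  unfolding subalgebra_def space_alg_filtration sets_alg_filtration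
  using assms by (intro conjI refl sets.sigma_sets_subset) (auto intro: measurable_sets)

lemma alg_filtration_mono:
  "t \<le> t' \<Longrightarrow> subalgebra (alg_filtration M x g t') (alg_filtration M x g t)"
  unfolding subalgebra_def space_alg_filtration sets_alg_filtration
  by (intro conjI refl sigma_sets_mono' Un_mono UN_mono) auto

lemma measurable_alg_filtration:
  fixes x g :: "nat \<Rightarrow> 'a \<Rightarrow> 'v::euclidean_space"
  shows "1 \<le> i \<Longrightarrow> i \<le> t \<Longrightarrow> x i \<in> borel_measurable (alg_filtration M x g t)"
    and "1 \<le> i \<Longrightarrow> i < t \<Longrightarrow> g i \<in> borel_measurable (alg_filtration M x g t)"
  by (intro measurableI; force simp: sets_alg_filtration intro: sigma_sets.Basic)+

section \<open>Upcrossings and convergence of submartingales\<close>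

text \<open>\<open>upcrossing_pending X a b n\<close>: since the last completed upcrossing of \<open>[a, b]\<close>, the path
  \<open>X\<close> has gone down to \<open>a\<close> and has not yet come back up to \<open>b\<close>.\<close>
fun upcrossing_pending :: "(nat \<Rightarrow> real) \<Rightarrow> real \<Rightarrow> real \<Rightarrow> nat \<Rightarrow> bool" where
  "upcrossing_pending X a b 0 = (X 0 \<le> a)"
| "upcrossing_pending X a b (Suc n) =
     (if upcrossing_pending X a b n then X (Suc n) < b else X (Suc n) \<le> a)"

fun upcrossings :: "(nat \<Rightarrow> real) \<Rightarrow> real \<Rightarrow> real \<Rightarrow> nat \<Rightarrow> nat" where
  "upcrossings X a b 0 = 0"
| "upcrossings X a b (Suc n) = upcrossings X a b n +
     (if upcrossing_pending X a b n \<and> \<not> upcrossing_pending X a b (Suc n) then 1 else 0)"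

lemma upcrossings_le: "upcrossings X a b n \<le> n"
  by (induction n) auto

lemma upcrossings_mono: "k \<le> j \<Longrightarrow> upcrossings X a b k \<le> upcrossings X a b j"
  by (induction j) (auto simp: le_Suc_eq)

lemma upcrossing_pending_if_le: "X k \<le> a \<Longrightarrow> a < b \<Longrightarrow> upcrossing_pending X a b k"
  by (cases k) auto

lemma not_upcrossing_pending_if_ge: "X k \<ge> b \<Longrightarrow> a < b \<Longrightarrow> \<not> upcrossing_pending X a b k"
  by (cases k) auto

lemma upcrossings_less:
  assumes "upcrossing_pending X a b k" "\<not> upcrossing_pending X a b j" "k \<le> j"
  shows "upcrossings X a b k < upcrossings X a b j"
  using assms
proof (induction j)
  case (Suc j)
  show ?case
  proof (cases "k = Suc j")
    case False
    hence "k \<le> j" using Suc.prems by simp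
    thus ?thesis using Suc upcrossings_mono[of k j X a b] by (cases "upcrossing_pending X a b j") auto
  qed (use Suc.prems in simp)
qed simp

lemma upcrossings_unbounded:
  assumes "a < b" "\<exists>\<^sub>F n in sequentially. X n \<le> a" "\<exists>\<^sub>F n in sequentially. X n \<ge> b"
  shows "\<exists>j. upcrossings X a b j \<ge> C"
proof (induction C)
  case (Suc C)
  then obtain j where j: "upcrossings X a b j \<ge> C" by blast
  obtain k where k: "k \<ge> j" "X k \<le> a" using assms(2) by (auto simp: frequently_sequentially)
  obtain j' where j': "j' \<ge> k" "X j' \<ge> b" using assms(3) by (auto simp: frequently_sequentially)
  have "upcrossings X a b j \<le> upcrossings X a b k" using k(1) by (rule upcrossings_mono)
  also have "\<dots> < upcrossings X a b j'"
    using k j' assms(1) by (intro upcrossings_less upcrossing_pending_if_le not_upcrossing_pending_if_ge)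
  finally show ?case using j by (intro exI[of _ j']) simp
qed simp

text \<open>Each completed upcrossing contributes at least \<open>b - a\<close> to the increments of
  \<open>max (X - a) 0\<close> collected while an upcrossing is pending.\<close>
lemma upcrossings_le_pending_increments:
  assumes "a < b"
  shows "(b - a) * upcrossings X a b n + (if upcrossing_pending X a b n then max (X n - a) 0 else 0)
         \<le> (\<Sum>k<n. if upcrossing_pending X a b k then max (X (Suc k) - a) 0 - max (X k - a) 0 else 0)"
proof (induction n)
  case (Suc n)
  thus ?case
    using assms by (cases "upcrossing_pending X a b n"; cases "upcrossing_pending X a b (Suc n)")
      (auto simp: algebra_simps)
qed simp

lemma convergent_if_no_rational_oscillation:
  fixes X :: "nat \<Rightarrow> real"
  assumes upper: "\<And>n. X n \<le> K"
    and frequently_ge: "\<exists>\<^sub>F n in sequentially. X n \<ge> B"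
    and no_oscillation: "\<And>a b. a \<in> \<rat> \<Longrightarrow> b \<in> \<rat> \<Longrightarrow> a < b \<Longrightarrow>
          \<not> ((\<exists>\<^sub>F n in sequentially. X n \<le> a) \<and> (\<exists>\<^sub>F n in sequentially. X n \<ge> b))"
  shows "convergent X"
proof -
  define l where "l = liminf (\<lambda>n. ereal (X n))"
  define u where "u = limsup (\<lambda>n. ereal (X n))"
  have frequently_le: "\<exists>\<^sub>F n in sequentially. X n \<le> c" if "l < ereal c" for c
  proof (rule ccontr)
    assume "\<not> (\<exists>\<^sub>F n in sequentially. X n \<le> c)"
    hence "\<forall>\<^sub>F n in sequentially. ereal c \<le> ereal (X n)"
      by (simp add: not_frequently) (auto elim: eventually_mono)
    hence "ereal c \<le> l" unfolding l_def by (rule Liminf_bounded)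
    thus False using that by simp
  qed
  have frequently_ge': "\<exists>\<^sub>F n in sequentially. X n \<ge> c" if "ereal c < u" for c
  proof (rule ccontr)
    assume "\<not> (\<exists>\<^sub>F n in sequentially. X n \<ge> c)"
    hence "\<forall>\<^sub>F n in sequentially. ereal (X n) \<le> ereal c"
      by (simp add: not_frequently) (auto elim: eventually_mono)
    hence "u \<le> ereal c" unfolding u_def by (rule Limsup_bounded)
    thus False using that by simp
  qed
  have "u \<le> ereal K" unfolding u_def using upper by (intro Limsup_bounded) simp
  moreover have "ereal B \<le> u"
  proof (rule ccontr)
    assume "\<not> ereal B \<le> u"
    hence "\<forall>\<^sub>F n in sequentially. ereal (X n) < ereal B"
      using Limsup_le_iff[THEN iffD1, OF order_refl, of sequentially "\<lambda>n. ereal (X n)"]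
      by (force simp: u_def not_le)
    thus False using frequently_ge by (simp add: frequently_def not_le)
  qed
  ultimately obtain U where U: "u = ereal U" by (cases u) auto
  have "u \<le> l"
  proof (rule ccontr)
    assume "\<not> u \<le> l"
    hence "l < ereal U" using U by simp
    then obtain c where c: "l < ereal c" "ereal c < ereal U" using ereal_dense2 by blast
    obtain a where a: "a \<in> \<rat>" "c < a" "a < U" using c Rats_dense_in_real[of c U] by auto
    obtain b where b: "b \<in> \<rat>" "a < b" "b < U" using a Rats_dense_in_real[of a U] by auto
    have "l < ereal a" using c a by (meson ereal_less_eq(3) less_le_trans order.strict_implies_order)
    thus False using no_oscillation[OF a(1) b(1,2)] frequently_le[of a] frequently_ge'[of b] U b by simp
  qed
  hence "X \<longlonglongrightarrow> U" using Liminf_le_Limsup[of sequentially "\<lambda>n. ereal (X n)"] U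
    by (intro limsup_le_liminf_real) (simp_all add: u_def l_def)
  thus ?thesis by (auto simp: convergent_def)
qed

text \<open>The submartingale property is stated through integrals over the sets of \<open>F n\<close> rather
  than through conditional expectations.\<close>
locale submartingale = prob_space M for M :: "'a measure" +
  fixes F :: "nat \<Rightarrow> 'a measure" and X :: "nat \<Rightarrow> 'a \<Rightarrow> real"
  assumes subalgebra: "\<And>n. subalgebra M (F n)"
    and filtration_mono: "\<And>n. subalgebra (F (Suc n)) (F n)"
    and adapted: "\<And>n. X n \<in> borel_measurable (F n)"
    and integrable_X: "\<And>n. integrable M (X n)"
    and set_integral_le_Suc: "\<And>n A. A \<in> sets (F n) \<Longrightarrow>
          (\<integral>\<omega>. indicator A \<omega> * X n \<omega> \<partial>M) \<le> (\<integral>\<omega>. indicator A \<omega> * X (Suc n) \<omega> \<partial>M)"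
begin

lemma borel_measurable_X [measurable]: "X n \<in> borel_measurable M"
  using measurable_from_subalg[OF subalgebra adapted] .

lemma sets_F: "A \<in> sets (F n) \<Longrightarrow> A \<in> sets M"
  using subalgebra[of n] by (auto simp: subalgebra_def)

lemma pred_upcrossing_pending: "Measurable.pred (F k) (\<lambda>\<omega>. upcrossing_pending (\<lambda>n. X n \<omega>) a b k)"
proof (induction k)
  case 0
  have [measurable]: "X 0 \<in> borel_measurable (F 0)" by (rule adapted)
  show ?case by simp
next
  case (Suc k)
  have [measurable]: "Measurable.pred (F (Suc k)) (\<lambda>\<omega>. upcrossing_pending (\<lambda>n. X n \<omega>) a b k)"
    by (rule measurable_from_subalg[OF filtration_mono Suc.IH])
  have [measurable]: "X (Suc k) \<in> borel_measurable (F (Suc k))" by (rule adapted)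
  show ?case by simp
qed

lemma integral_X_0_le: "(\<integral>\<omega>. X 0 \<omega> \<partial>M) \<le> (\<integral>\<omega>. X n \<omega> \<partial>M)"
proof (induction n)
  case (Suc n)
  have "space M \<in> sets (F n)" using subalgebra[of n] by (metis sets.top subalgebra_def)
  moreover have "(\<integral>\<omega>. indicator (space M) \<omega> * X j \<omega> \<partial>M) = (\<integral>\<omega>. X j \<omega> \<partial>M)" for j
    by (rule Bochner_Integration.integral_cong) auto
  ultimately show ?case using set_integral_le_Suc[of "space M" n] Suc.IH by simp
qed simp

text \<open>Off the pending phase the increments of \<open>max (X - a) 0\<close> have nonnegative expectation,
  by the submartingale property on \<open>{a < X k}\<close>.\<close>
lemma integral_pending_increment_le:
  fixes a b :: real and k :: nat
  defines "W \<equiv> \<lambda>n \<omega>. max (X n \<omega> - a) 0"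
    and "U \<equiv> {\<omega> \<in> space M. upcrossing_pending (\<lambda>n. X n \<omega>) a b k}"
  shows "(\<integral>\<omega>. indicator U \<omega> * (W (Suc k) \<omega> - W k \<omega>) \<partial>M) \<le> (\<integral>\<omega>. W (Suc k) \<omega> - W k \<omega> \<partial>M)"
proof -
  define A where "A = {\<omega> \<in> space M. \<not> upcrossing_pending (\<lambda>n. X n \<omega>) a b k \<and> a < X k \<omega>}"
  have [measurable]: "Measurable.pred (F k) (\<lambda>\<omega>. upcrossing_pending (\<lambda>n. X n \<omega>) a b k)"
    "X k \<in> borel_measurable (F k)" by (rule pred_upcrossing_pending adapted)+
  have "space (F k) = space M" using subalgebra[of k] by (simp add: subalgebra_def)
  moreover have "{\<omega> \<in> space (F k). \<not> upcrossing_pending (\<lambda>n. X n \<omega>) a b k \<and> a < X k \<omega>} \<in> sets (F k)"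
    by measurable
  ultimately have AF: "A \<in> sets (F k)" by (simp add: A_def)
  have "Measurable.pred M (\<lambda>\<omega>. upcrossing_pending (\<lambda>n. X n \<omega>) a b k)"
    by (rule measurable_from_subalg[OF subalgebra pred_upcrossing_pending])
  hence UM: "U \<in> sets M" unfolding U_def by measurable
  have AM: "A \<in> sets M" by (rule sets_F[OF AF])
  have int_W: "integrable M (W n)" for n unfolding W_def using integrable_X by (intro integrable_max) auto
  have int_IX: "integrable M (\<lambda>\<omega>. indicator B \<omega> * f \<omega>)" if "B \<in> sets M" "integrable M f" for B and f :: "'a \<Rightarrow> real"
    using integrable_mult_indicator[OF that] by simp
  have "0 \<le> (\<integral>\<omega>. indicator A \<omega> * (X (Suc k) \<omega> - X k \<omega>) \<partial>M)"
    using set_integral_le_Suc[OF AF] int_IX[OF AM integrable_X] by (simp add: right_diff_distrib)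
  also have "\<dots> \<le> (\<integral>\<omega>. indicator (space M - U) \<omega> * (W (Suc k) \<omega> - W k \<omega>) \<partial>M)"
  proof (rule integral_mono)
    show "integrable M (\<lambda>\<omega>. indicator A \<omega> * (X (Suc k) \<omega> - X k \<omega>))"
      using int_IX[OF AM Bochner_Integration.integrable_diff[OF integrable_X integrable_X]] .
    show "integrable M (\<lambda>\<omega>. indicator (space M - U) \<omega> * (W (Suc k) \<omega> - W k \<omega>))"
      using int_W UM by (intro int_IX) auto
    fix \<omega> assume "\<omega> \<in> space M"
    thus "indicator A \<omega> * (X (Suc k) \<omega> - X k \<omega>) \<le> indicator (space M - U) \<omega> * (W (Suc k) \<omega> - W k \<omega>)"
      by (cases "\<omega> \<in> U") (auto simp: A_def U_def W_def indicator_def)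
  qed
  finally have off_pending: "0 \<le> (\<integral>\<omega>. indicator (space M - U) \<omega> * (W (Suc k) \<omega> - W k \<omega>) \<partial>M)" .
  have "(\<integral>\<omega>. W (Suc k) \<omega> - W k \<omega> \<partial>M)
      = (\<integral>\<omega>. indicator U \<omega> * (W (Suc k) \<omega> - W k \<omega>) + indicator (space M - U) \<omega> * (W (Suc k) \<omega> - W k \<omega>) \<partial>M)"
    by (rule Bochner_Integration.integral_cong) (auto simp: indicator_def U_def)
  also have "\<dots> = (\<integral>\<omega>. indicator U \<omega> * (W (Suc k) \<omega> - W k \<omega>) \<partial>M)
      + (\<integral>\<omega>. indicator (space M - U) \<omega> * (W (Suc k) \<omega> - W k \<omega>) \<partial>M)"
    using UM int_W by (intro Bochner_Integration.integral_add int_IX) auto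
  finally show ?thesis using off_pending by linarith
qed

lemma borel_measurable_upcrossings [measurable]:
  "(\<lambda>\<omega>. real (upcrossings (\<lambda>n. X n \<omega>) a b n)) \<in> borel_measurable M"
proof (induction n)
  case (Suc n)
  have [measurable]: "Measurable.pred M (\<lambda>\<omega>. upcrossing_pending (\<lambda>n. X n \<omega>) a b k)" for k
    by (rule measurable_from_subalg[OF subalgebra pred_upcrossing_pending])
  note Suc.IH [measurable]
  show ?case by (simp del: upcrossing_pending.simps)
qed simp

lemma upcrossings_integral_le:
  assumes ab: "a < b" and bounded: "AE \<omega> in M. \<forall>n. X n \<omega> \<le> K"
  shows "(b - a) * (\<integral>\<omega>. real (upcrossings (\<lambda>n. X n \<omega>) a b n) \<partial>M) \<le> max (K - a) 0"
proof -
  define W where "W n \<omega> = max (X n \<omega> - a) 0" for n \<omega>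
  define I where "I k \<omega> = indicator {\<omega> \<in> space M. upcrossing_pending (\<lambda>n. X n \<omega>) a b k} \<omega>
    * (W (Suc k) \<omega> - W k \<omega>)" for k \<omega>
  have int_W: "integrable M (W n)" for n unfolding W_def[abs_def] using integrable_X by auto
  have [measurable]: "Measurable.pred M (\<lambda>\<omega>. upcrossing_pending (\<lambda>n. X n \<omega>) a b k)" for k
    by (rule measurable_from_subalg[OF subalgebra pred_upcrossing_pending])
  have int_I: "integrable M (I k)" for k
  proof -
    have "{\<omega> \<in> space M. upcrossing_pending (\<lambda>n. X n \<omega>) a b k} \<in> sets M" by measurable
    from integrable_mult_indicator[OF this Bochner_Integration.integrable_diff[OF int_W int_W]]
    show ?thesis by (simp add: I_def[abs_def])
  qed
  have "(b - a) * (\<integral>\<omega>. real (upcrossings (\<lambda>n. X n \<omega>) a b n) \<partial>M) \<le> (\<integral>\<omega>. (\<Sum>k<n. I k \<omega>) \<partial>M)"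
  proof -
    have "(b - a) * real (upcrossings (\<lambda>n. X n \<omega>) a b n) \<le> (\<Sum>k<n. I k \<omega>)" if "\<omega> \<in> space M" for \<omega>
    proof -
      have "(\<Sum>k<n. I k \<omega>) = (\<Sum>k<n. if upcrossing_pending (\<lambda>n. X n \<omega>) a b k
          then max (X (Suc k) \<omega> - a) 0 - max (X k \<omega> - a) 0 else 0)"
        using that by (intro sum.cong) (auto simp: I_def W_def)
      moreover have "0 \<le> (if upcrossing_pending (\<lambda>n. X n \<omega>) a b n then max (X n \<omega> - a) 0 else 0)" by simp
      ultimately show ?thesis using upcrossings_le_pending_increments[OF ab, of "\<lambda>n. X n \<omega>" n] by linarith
    qed
    moreover have "integrable M (\<lambda>\<omega>. real (upcrossings (\<lambda>n. X n \<omega>) a b n))"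
      by (rule integrable_const_bound[where B="real n"]) (auto simp: upcrossings_le)
    ultimately show ?thesis
      using int_I by (subst integral_mult_right_zero[symmetric]) (intro integral_mono integrable_sum; auto)
  qed
  also have "\<dots> \<le> (\<Sum>k<n. (\<integral>\<omega>. W (Suc k) \<omega> - W k \<omega> \<partial>M))"
    using int_I integral_pending_increment_le[of a b]
    by (subst Bochner_Integration.integral_sum) (auto intro!: sum_mono simp: I_def[abs_def] W_def)
  also have "\<dots> = (\<integral>\<omega>. W n \<omega> \<partial>M) - (\<integral>\<omega>. W 0 \<omega> \<partial>M)"
    using int_W sum_lessThan_telescope[of "\<lambda>k. \<integral>\<omega>. W k \<omega> \<partial>M" n]
    by (simp add: Bochner_Integration.integral_diff)
  also have "\<dots> \<le> (\<integral>\<omega>. max (K - a) 0 \<partial>M)"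
  proof -
    have "(\<integral>\<omega>. W n \<omega> \<partial>M) \<le> (\<integral>\<omega>. max (K - a) 0 \<partial>M)"
      using bounded by (intro integral_mono_AE int_W)
        (auto simp: W_def max_def elim!: eventually_mono dest: spec[of _ n])
    moreover have "0 \<le> (\<integral>\<omega>. W 0 \<omega> \<partial>M)" by (simp add: W_def)
    ultimately show ?thesis by linarith
  qed
  finally show ?thesis by (simp add: prob_space)
qed

lemma AE_not_oscillating:
  assumes ab: "a < b" and bounded: "AE \<omega> in M. \<forall>n. X n \<omega> \<le> K"
  shows "AE \<omega> in M. \<not> ((\<exists>\<^sub>F n in sequentially. X n \<omega> \<le> a) \<and> (\<exists>\<^sub>F n in sequentially. X n \<omega> \<ge> b))"
proof -
  define f where "f n \<omega> = ennreal (real (upcrossings (\<lambda>n. X n \<omega>) a b n))" for n \<omega>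
  have [measurable]: "f n \<in> borel_measurable M" for n unfolding f_def by measurable
  have "incseq f" unfolding incseq_def le_fun_def f_def by (auto intro!: ennreal_leI upcrossings_mono)
  hence "(\<integral>\<^sup>+ \<omega>. (SUP n. f n \<omega>) \<partial>M) = (SUP n. integral\<^sup>N M (f n))"
    by (intro nn_integral_monotone_convergence_SUP) auto
  also have "\<dots> \<le> ennreal (max (K - a) 0 / (b - a))"
  proof (rule SUP_least)
    fix n
    have "integral\<^sup>N M (f n) = ennreal (\<integral>\<omega>. real (upcrossings (\<lambda>n. X n \<omega>) a b n) \<partial>M)"
      unfolding f_def
      by (intro nn_integral_eq_integral integrable_const_bound[where B="real n"]) (auto simp: upcrossings_le)
    also have "\<dots> \<le> ennreal (max (K - a) 0 / (b - a))"
      using upcrossings_integral_le[OF ab bounded, of n] ab by (intro ennreal_leI) (simp add: field_simps)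
    finally show "integral\<^sup>N M (f n) \<le> ennreal (max (K - a) 0 / (b - a))" .
  qed
  finally have "AE \<omega> in M. (SUP n. f n \<omega>) \<noteq> \<infinity>"
    by (intro nn_integral_noteq_infinite) (auto simp: top_unique)
  thus ?thesis
  proof eventually_elim
    fix \<omega> assume "(SUP n. f n \<omega>) \<noteq> \<infinity>"
    then obtain s where s: "(SUP n. f n \<omega>) = ennreal s" by (cases "SUP n. f n \<omega>") auto
    show "\<not> ((\<exists>\<^sub>F n in sequentially. X n \<omega> \<le> a) \<and> (\<exists>\<^sub>F n in sequentially. X n \<omega> \<ge> b))"
    proof
      assume "(\<exists>\<^sub>F n in sequentially. X n \<omega> \<le> a) \<and> (\<exists>\<^sub>F n in sequentially. X n \<omega> \<ge> b)"
      then obtain j where j: "upcrossings (\<lambda>n. X n \<omega>) a b j \<ge> nat \<lceil>s\<rceil> + 1"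
        using upcrossings_unbounded[OF ab, of "\<lambda>n. X n \<omega>"] by blast
      have "f j \<omega> \<le> ennreal s" using s by (metis SUP_upper UNIV_I)
      hence "real (upcrossings (\<lambda>n. X n \<omega>) a b j) \<le> max s 0"
        by (cases "s \<ge> 0") (auto simp: f_def ennreal_le_iff ennreal_neg)
      thus False using j by linarith
    qed
  qed
qed

lemma AE_frequently_ge:
  assumes bounded: "AE \<omega> in M. \<forall>n. X n \<omega> \<le> K"
  shows "AE \<omega> in M. \<exists>B. \<exists>\<^sub>F n in sequentially. X n \<omega> \<ge> B"
proof -
  define Z where "Z n \<omega> = ennreal (K - X n \<omega>)" for n \<omega>
  have [measurable]: "Z n \<in> borel_measurable M" for n unfolding Z_def by measurable
  have "(\<integral>\<^sup>+ \<omega>. liminf (\<lambda>n. Z n \<omega>) \<partial>M) \<le> liminf (\<lambda>n. integral\<^sup>N M (Z n))"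
    by (rule nn_integral_liminf) simp
  also have "\<dots> \<le> ennreal (K - (\<integral>\<omega>. X 0 \<omega> \<partial>M))"
  proof (intro Liminf_le always_eventually allI)
    fix n
    have "integral\<^sup>N M (Z n) = ennreal (\<integral>\<omega>. K - X n \<omega> \<partial>M)"
      unfolding Z_def using bounded integrable_X[of n]
      by (intro nn_integral_eq_integral) (auto elim!: eventually_mono)
    also have "\<dots> \<le> ennreal (K - (\<integral>\<omega>. X 0 \<omega> \<partial>M))"
      using integrable_X[of n] integral_X_0_le[of n] by (intro ennreal_leI) (simp add: prob_space)
    finally show "integral\<^sup>N M (Z n) \<le> ennreal (K - (\<integral>\<omega>. X 0 \<omega> \<partial>M))" .
  qed simp
  finally have "AE \<omega> in M. liminf (\<lambda>n. Z n \<omega>) \<noteq> \<infinity>"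
    by (intro nn_integral_noteq_infinite) (auto simp: top_unique)
  thus ?thesis
  proof eventually_elim
    case (elim \<omega>)
    obtain l where l: "liminf (\<lambda>n. Z n \<omega>) = ennreal l" "0 \<le> l"
      using elim by (cases "liminf (\<lambda>n. Z n \<omega>)") auto
    have "\<exists>\<^sub>F n in sequentially. X n \<omega> \<ge> K - (l + 1)"
    proof (rule ccontr)
      assume "\<not> (\<exists>\<^sub>F n in sequentially. X n \<omega> \<ge> K - (l + 1))"
      hence "\<forall>\<^sub>F n in sequentially. ennreal (l + 1) \<le> Z n \<omega>"
        by (simp add: not_frequently Z_def) (auto elim!: eventually_mono intro: ennreal_leI)
      hence "ennreal (l + 1) \<le> liminf (\<lambda>n. Z n \<omega>)" by (rule Liminf_bounded)
      thus False using l by (simp add: ennreal_le_iff2)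
    qed
    thus ?case by blast
  qed
qed

theorem AE_convergent:
  assumes bounded: "AE \<omega> in M. \<forall>n. X n \<omega> \<le> K"
  shows "AE \<omega> in M. convergent (\<lambda>n. X n \<omega>)"
proof -
  have "AE \<omega> in M. \<forall>p\<in>\<rat> \<times> \<rat>. fst p < snd p \<longrightarrow>
      \<not> ((\<exists>\<^sub>F n in sequentially. X n \<omega> \<le> fst p) \<and> (\<exists>\<^sub>F n in sequentially. X n \<omega> \<ge> snd p))"
    using AE_not_oscillating[OF _ bounded]
    by (intro AE_ball_countable') (auto intro: countable_SIGMA countable_rat)
  with AE_frequently_ge[OF bounded] bounded show ?thesis
  proof eventually_elim
    case (elim \<omega>)
    then obtain B where "\<exists>\<^sub>F n in sequentially. X n \<omega> \<ge> B" by blast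
    with elim(2,3) show "convergent (\<lambda>n. X n \<omega>)"
      by (intro convergent_if_no_rational_oscillation[where K=K]) auto
  qed
qed

end

section \<open>Almost sure convergence of the Bregman divergence\<close>

lemma (in prob_space) integral_inner_cond_exp:
  fixes g v w :: "'a \<Rightarrow> 'v::euclidean_space"
  assumes N: "subalgebra M N"
    and g [measurable]: "g \<in> borel_measurable M" and g_bounded: "AE \<omega> in M. norm (g \<omega>) \<le> C"
    and w: "w \<in> borel_measurable N" and w_bounded: "AE \<omega> in M. norm (w \<omega>) \<le> D"
    and v [measurable]: "v \<in> borel_measurable M"
    and cond_exp: "\<And>b. b \<in> Basis \<Longrightarrow> AE \<omega> in M. real_cond_exp M N (\<lambda>\<omega>. g \<omega> \<bullet> b) \<omega> = v \<omega> \<bullet> b"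
  shows "integrable M (\<lambda>\<omega>. w \<omega> \<bullet> g \<omega>)" and "integrable M (\<lambda>\<omega>. w \<omega> \<bullet> v \<omega>)"
    and "(\<integral>\<omega>. w \<omega> \<bullet> g \<omega> \<partial>M) = (\<integral>\<omega>. w \<omega> \<bullet> v \<omega> \<partial>M)"
proof -
  interpret N: sigma_finite_subalgebra M N
    using N by (intro finite_measure_subalgebra_is_sigma_finite)
      (auto simp: finite_measure_subalgebra_def finite_measure_subalgebra_axioms_def finite_measure_axioms)
  have wN [measurable]: "(\<lambda>\<omega>. w \<omega> \<bullet> b) \<in> borel_measurable N" for b using w by measurable
  have [measurable]: "w \<in> borel_measurable M" by (rule measurable_from_subalg[OF N w])
  have int_wb_gb: "integrable M (\<lambda>\<omega>. (w \<omega> \<bullet> b) * (g \<omega> \<bullet> b))" if "b \<in> Basis" for b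
  proof (rule integrable_const_bound[where B="D * C"])
    show "AE \<omega> in M. norm ((w \<omega> \<bullet> b) * (g \<omega> \<bullet> b)) \<le> D * C"
      using w_bounded g_bounded
    proof eventually_elim
      case (elim \<omega>)
      have "\<bar>w \<omega> \<bullet> b\<bar> \<le> D" "\<bar>g \<omega> \<bullet> b\<bar> \<le> C"
        using Basis_le_norm[OF that, of "w \<omega>"] Basis_le_norm[OF that, of "g \<omega>"] elim by linarith+
      thus ?case by (simp add: abs_mult mult_mono')
    qed
  qed simp
  have int_wb_vb: "integrable M (\<lambda>\<omega>. (w \<omega> \<bullet> b) * (v \<omega> \<bullet> b))"
    and eq_b: "(\<integral>\<omega>. (w \<omega> \<bullet> b) * (g \<omega> \<bullet> b) \<partial>M) = (\<integral>\<omega>. (w \<omega> \<bullet> b) * (v \<omega> \<bullet> b) \<partial>M)"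
    if b: "b \<in> Basis" for b
  proof -
    have ae: "AE \<omega> in M. (w \<omega> \<bullet> b) * real_cond_exp M N (\<lambda>\<omega>. g \<omega> \<bullet> b) \<omega> = (w \<omega> \<bullet> b) * (v \<omega> \<bullet> b)"
      using cond_exp[OF b] by eventually_elim simp
    have "(\<lambda>\<omega>. g \<omega> \<bullet> b) \<in> borel_measurable M" by measurable
    note ce = N.real_cond_exp_intg[OF int_wb_gb[OF b] wN this]
    show "integrable M (\<lambda>\<omega>. (w \<omega> \<bullet> b) * (v \<omega> \<bullet> b))"
      by (rule integrable_cong_AE_imp[OF ce(1) _ ae]) measurable
    show "(\<integral>\<omega>. (w \<omega> \<bullet> b) * (g \<omega> \<bullet> b) \<partial>M) = (\<integral>\<omega>. (w \<omega> \<bullet> b) * (v \<omega> \<bullet> b) \<partial>M)"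
      using ce(2) integral_cong_AE[OF _ _ ae] by (simp add: borel_measurable_cond_exp2)
  qed
  have wv: "w \<omega> \<bullet> v \<omega> = (\<Sum>b\<in>Basis. (w \<omega> \<bullet> b) * (v \<omega> \<bullet> b))"
    and wg: "w \<omega> \<bullet> g \<omega> = (\<Sum>b\<in>Basis. (w \<omega> \<bullet> b) * (g \<omega> \<bullet> b))" for \<omega>
    by (rule euclidean_inner)+
  show "integrable M (\<lambda>\<omega>. w \<omega> \<bullet> g \<omega>)" unfolding wg using int_wb_gb by auto
  show "integrable M (\<lambda>\<omega>. w \<omega> \<bullet> v \<omega>)" unfolding wv using int_wb_vb by auto
  show "(\<integral>\<omega>. w \<omega> \<bullet> g \<omega> \<partial>M) = (\<integral>\<omega>. w \<omega> \<bullet> v \<omega> \<partial>M)"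
    unfolding wv wg using int_wb_gb int_wb_vb eq_b by (simp add: Bochner_Integration.integral_sum)
qed

locale alg_stochastic_setting = prob_space M for M :: "'a measure" +
  fixes gradF :: "'v::euclidean_space \<Rightarrow> 'v" and xstar :: 'v
    and g :: "nat \<Rightarrow> 'a \<Rightarrow> 'v" and eta :: "nat \<Rightarrow> 'a \<Rightarrow> real" and G \<gamma> :: real
    and x :: "nat \<Rightarrow> 'a \<Rightarrow> 'v" and Fs :: "nat \<Rightarrow> 'a measure"
  defines "x \<equiv> \<lambda>t \<omega>. alg_x (\<lambda>s. g s \<omega>) (\<lambda>s. eta s \<omega>) t"
    and "Fs \<equiv> alg_filtration M x g"
  assumes G_pos: "G > 0"
    and gradF_continuous: "continuous_on UNIV gradF"
    and gradF_coherent: "\<And>y. gradF y \<bullet> (y - xstar) \<ge> 0"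
    and g_measurable: "\<And>t. t \<ge> 1 \<Longrightarrow> g t \<in> borel_measurable M"
    and eta_adapted: "\<And>t. t \<ge> 1 \<Longrightarrow> eta t \<in> borel_measurable (Fs t)"
    and eta_nonneg: "\<And>t \<omega>. t \<ge> 1 \<Longrightarrow> \<omega> \<in> space M \<Longrightarrow> eta t \<omega> \<ge> 0"
    and cond_exp_g: "\<And>t b. t \<ge> 1 \<Longrightarrow> b \<in> Basis \<Longrightarrow>
          AE \<omega> in M. real_cond_exp M (Fs t) (\<lambda>\<omega>. g t \<omega> \<bullet> b) \<omega> = gradF (x t \<omega>) \<bullet> b"
    and g_bounded: "\<And>t. t \<ge> 1 \<Longrightarrow> AE \<omega> in M. norm (g t \<omega>) \<le> G"
    and step_sizes: "AE \<omega> in M. summable (\<lambda>t. (eta (Suc t) \<omega>)\<^sup>2 * (norm (g (Suc t) \<omega>))\<^sup>2) \<and>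
          (\<Sum>t. (eta (Suc t) \<omega>)\<^sup>2 * (norm (g (Suc t) \<omega>))\<^sup>2) < \<gamma> \<and> (\<forall>t\<ge>1. eta t \<omega> \<le> 1 / G)"
begin

abbreviation S2 :: "nat \<Rightarrow> 'a \<Rightarrow> real" where "S2 t \<omega> \<equiv> alg_S2 (\<lambda>s. g s \<omega>) (\<lambda>s. eta s \<omega>) t"
abbreviation Q :: "nat \<Rightarrow> 'a \<Rightarrow> real" where "Q t \<omega> \<equiv> alg_Q (\<lambda>s. g s \<omega>) (\<lambda>s. eta s \<omega>) t"
abbreviation \<theta> :: "nat \<Rightarrow> 'a \<Rightarrow> 'v" where "\<theta> t \<omega> \<equiv> alg_theta (\<lambda>s. g s \<omega>) (\<lambda>s. eta s \<omega>) t"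
abbreviation loss :: "nat \<Rightarrow> 'a \<Rightarrow> 'v" where "loss t \<omega> \<equiv> alg_loss (\<lambda>s. g s \<omega>) (\<lambda>s. eta s \<omega>) t"
abbreviation dual :: "nat \<Rightarrow> 'a \<Rightarrow> real" where "dual t \<omega> \<equiv> alg_dual (\<lambda>s. g s \<omega>) (\<lambda>s. eta s \<omega>) xstar t"

lemma x_eq: "x t \<omega> = pot_grad (S2 (t-1) \<omega>) (Q (t-1) \<omega>) (\<theta> (t-1) \<omega>)"
  by (simp add: x_def alg_x_eq_pot_grad)

lemma eta_measurable: "t \<ge> 1 \<Longrightarrow> eta t \<in> borel_measurable M"
proof (induction t rule: nat_less_induct)
  case (1 t)
  have "x i \<in> borel_measurable M" if "1 \<le> i" "i \<le> t" for i
  proof -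
    have [measurable]: "S2 (i-1) \<in> borel_measurable M" "Q (i-1) \<in> borel_measurable M"
      "\<theta> (i-1) \<in> borel_measurable M"
      using 1 that g_measurable by (auto intro!: measurable_alg_state)
    show ?thesis unfolding x_eq[abs_def] by measurable
  qed
  hence "subalgebra M (Fs t)"
    unfolding Fs_def using g_measurable by (intro subalgebra_alg_filtration) auto
  thus ?case using measurable_from_subalg eta_adapted[OF "1.prems"] by blast
qed

lemma measurable_state [measurable]:
  "S2 t \<in> borel_measurable M" "Q t \<in> borel_measurable M" "\<theta> t \<in> borel_measurable M"
  using g_measurable eta_measurable by (auto intro!: measurable_alg_state)

lemma measurable_x [measurable]: "x t \<in> borel_measurable M"
  unfolding x_eq[abs_def] by measurable

lemma subalgebra_Fs: "subalgebra M (Fs t)"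
  unfolding Fs_def using g_measurable by (intro subalgebra_alg_filtration) auto

lemma measurable_state_Fs:
  "S2 t \<in> borel_measurable (Fs (Suc t))" "Q t \<in> borel_measurable (Fs (Suc t))"
  "\<theta> t \<in> borel_measurable (Fs (Suc t))"
proof -
  have "eta i \<in> borel_measurable (Fs (Suc t))" if "1 \<le> i" "i \<le> t" for i
  proof -
    have "subalgebra (Fs (Suc t)) (Fs i)" using that unfolding Fs_def by (intro alg_filtration_mono) auto
    thus ?thesis using measurable_from_subalg eta_adapted[OF that(1)] by blast
  qed
  moreover have "g i \<in> borel_measurable (Fs (Suc t))" if "1 \<le> i" "i \<le> t" for i
    using that unfolding Fs_def by (intro measurable_alg_filtration) auto
  ultimately show "S2 t \<in> borel_measurable (Fs (Suc t))" "Q t \<in> borel_measurable (Fs (Suc t))"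
    "\<theta> t \<in> borel_measurable (Fs (Suc t))"
    by (auto intro!: measurable_alg_state)
qed

lemma AE_bounded_losses:
  "AE \<omega> in M. (\<forall>t\<ge>1. norm (loss t \<omega>) \<le> 1) \<and> (\<forall>t. (\<Sum>i<t. (norm (loss (Suc i) \<omega>))\<^sup>2) \<le> \<gamma>)"
proof -
  have "AE \<omega> in M. \<forall>t. t \<ge> 1 \<longrightarrow> norm (g t \<omega>) \<le> G"
    unfolding AE_all_countable using g_bounded by (metis (mono_tags) AE_I2 AE_mp)
  with step_sizes AE_space show ?thesis
  proof eventually_elim
    case (elim \<omega>)
    have "norm (loss t \<omega>) \<le> 1" if "t \<ge> 1" for t
    proof -
      have "norm (loss t \<omega>) = eta t \<omega> * norm (g t \<omega>)"
        using eta_nonneg[OF that elim(2)] by (simp add: alg_loss_def)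
      also have "\<dots> \<le> (1/G) * G" using elim eta_nonneg[OF that elim(2)] that G_pos by (intro mult_mono) auto
      finally show ?thesis using G_pos by simp
    qed
    moreover have "(\<Sum>i<t. (norm (loss (Suc i) \<omega>))\<^sup>2) \<le> \<gamma>" for t
    proof -
      have "(\<Sum>i<t. (norm (loss (Suc i) \<omega>))\<^sup>2) = (\<Sum>i<t. (eta (Suc i) \<omega>)\<^sup>2 * (norm (g (Suc i) \<omega>))\<^sup>2)"
        by (simp add: alg_loss_def power_mult_distrib)
      also have "\<dots> \<le> (\<Sum>i. (eta (Suc i) \<omega>)\<^sup>2 * (norm (g (Suc i) \<omega>))\<^sup>2)"
        using elim(1) by (intro sum_le_suminf) auto
      finally show ?thesis using elim(1) by simp
    qed
    ultimately show ?case by blast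
  qed
qed

lemma AE_dual_ge: "AE \<omega> in M. \<forall>t. - (2 * (norm xstar)\<^sup>2 * exp (1 + \<gamma>/2)) \<le> dual t \<omega>"
  using AE_bounded_losses by eventually_elim (auto intro: alg_dual_ge_bounded)

lemma integrable_dual: "integrable M (dual t)"
proof (rule integrable_const_bound[where B="exp ((real t)\<^sup>2 + t) + t * norm xstar + 2 * (norm xstar)\<^sup>2 * exp (1 + \<gamma>/2)"])
  show "AE \<omega> in M. norm (dual t \<omega>) \<le> exp ((real t)\<^sup>2 + t) + t * norm xstar + 2 * (norm xstar)\<^sup>2 * exp (1 + \<gamma>/2)"
    using AE_bounded_losses
  proof eventually_elim
    case (elim \<omega>)
    have "- (2 * (norm xstar)\<^sup>2 * exp (1 + \<gamma>/2)) \<le> dual t \<omega>"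
      "dual t \<omega> \<le> exp ((real t)\<^sup>2 + t) + t * norm xstar"
      using elim by (auto intro: alg_dual_ge_bounded alg_dual_le)
    moreover have "0 \<le> 2 * (norm xstar)\<^sup>2 * exp (1 + \<gamma>/2)" "0 \<le> exp ((real t)\<^sup>2 + t) + t * norm xstar"
      by simp_all
    ultimately show ?case unfolding real_norm_def abs_le_iff by linarith
  qed
  show "dual t \<in> borel_measurable M" unfolding alg_dual_def by measurable
qed

lemma set_integral_dual_Suc_le:
  assumes A: "A \<in> sets (Fs (Suc n))"
  shows "(\<integral>\<omega>. indicator A \<omega> * dual (Suc n) \<omega> \<partial>M) \<le> (\<integral>\<omega>. indicator A \<omega> * dual n \<omega> \<partial>M)"
proof -
  define w where "w \<omega> = (indicator A \<omega> * eta (Suc n) \<omega>) *\<^sub>R (x (Suc n) \<omega> - xstar)" for \<omega>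
  have [measurable]: "A \<in> sets (Fs (Suc n))" "eta (Suc n) \<in> borel_measurable (Fs (Suc n))"
    using A eta_adapted[of "Suc n"] by auto
  have [measurable]: "x (Suc n) \<in> borel_measurable (Fs (Suc n))"
    unfolding Fs_def by (rule measurable_alg_filtration) auto
  have wF: "w \<in> borel_measurable (Fs (Suc n))" unfolding w_def[abs_def] by measurable
  have AM: "A \<in> sets M" using A subalgebra_Fs[of "Suc n"] by (auto simp: subalgebra_def)
  have [measurable]: "gradF \<in> borel_measurable borel"
    by (rule borel_measurable_continuous_onI[OF gradF_continuous])
  have w_bounded: "AE \<omega> in M. norm (w \<omega>) \<le> (1/G) * (exp ((real n)\<^sup>2 + n) + norm xstar)"
    using AE_bounded_losses step_sizes AE_space
  proof eventually_elim
    case (elim \<omega>)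
    have "norm (x (Suc n) \<omega> - xstar) \<le> exp ((real n)\<^sup>2 + n) + norm xstar"
      using norm_triangle_ineq4[of "x (Suc n) \<omega>" xstar] norm_alg_x_le[of "\<lambda>s. g s \<omega>" "\<lambda>s. eta s \<omega>" \<gamma> n] elim(1)
      by (auto simp: x_def)
    moreover have "0 \<le> eta (Suc n) \<omega>" "eta (Suc n) \<omega> \<le> 1/G" using elim eta_nonneg by auto
    ultimately have "eta (Suc n) \<omega> * norm (x (Suc n) \<omega> - xstar) \<le> (1/G) * (exp ((real n)\<^sup>2 + n) + norm xstar)"
      using G_pos by (intro mult_mono) auto
    moreover have "0 \<le> (1/G) * (exp ((real n)\<^sup>2 + n) + norm xstar)" using G_pos by simp
    ultimately show ?case using \<open>0 \<le> eta (Suc n) \<omega>\<close> by (auto simp: w_def indicator_def)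
  qed
  have "g (Suc n) \<in> borel_measurable M" "AE \<omega> in M. norm (g (Suc n) \<omega>) \<le> G"
    "(\<lambda>\<omega>. gradF (x (Suc n) \<omega>)) \<in> borel_measurable M"
    using g_measurable g_bounded by auto
  note cond = integral_inner_cond_exp[OF subalgebra_Fs this(1,2) wF w_bounded this(3) cond_exp_g[of "Suc n"]]
  have "0 \<le> (\<integral>\<omega>. w \<omega> \<bullet> gradF (x (Suc n) \<omega>) \<partial>M)"
    using gradF_coherent eta_nonneg
    by (intro Bochner_Integration.integral_nonneg) (auto simp: w_def indicator_def inner_commute)
  hence "0 \<le> (\<integral>\<omega>. w \<omega> \<bullet> g (Suc n) \<omega> \<partial>M)" using cond(3) by simp
  moreover have "(\<integral>\<omega>. indicator A \<omega> * dual (Suc n) \<omega> \<partial>M)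
      \<le> (\<integral>\<omega>. indicator A \<omega> * dual n \<omega> - w \<omega> \<bullet> g (Suc n) \<omega> \<partial>M)"
  proof (rule integral_mono_AE)
    show "integrable M (\<lambda>\<omega>. indicator A \<omega> * dual (Suc n) \<omega>)"
      using integrable_mult_indicator[OF AM integrable_dual] by simp
    show "integrable M (\<lambda>\<omega>. indicator A \<omega> * dual n \<omega> - w \<omega> \<bullet> g (Suc n) \<omega>)"
      using integrable_mult_indicator[OF AM integrable_dual] cond(1) by simp
    show "AE \<omega> in M. indicator A \<omega> * dual (Suc n) \<omega> \<le> indicator A \<omega> * dual n \<omega> - w \<omega> \<bullet> g (Suc n) \<omega>"
      using AE_bounded_losses
    proof eventually_elim
      case (elim \<omega>)
      hence "dual (Suc n) \<omega> \<le> dual n \<omega> - loss (Suc n) \<omega> \<bullet> (x (Suc n) \<omega> - xstar)"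
        using alg_dual_step[of "\<lambda>s. g s \<omega>" "\<lambda>s. eta s \<omega>" n xstar] by (simp add: x_def)
      thus ?case by (auto simp: w_def indicator_def alg_loss_def inner_commute)
    qed
  qed
  moreover have "(\<integral>\<omega>. indicator A \<omega> * dual n \<omega> - w \<omega> \<bullet> g (Suc n) \<omega> \<partial>M)
      = (\<integral>\<omega>. indicator A \<omega> * dual n \<omega> \<partial>M) - (\<integral>\<omega>. w \<omega> \<bullet> g (Suc n) \<omega> \<partial>M)"
    using integrable_mult_indicator[OF AM integrable_dual] cond(1)
    by (intro Bochner_Integration.integral_diff) simp_all
  ultimately show ?thesis by linarith
qed

lemma submartingale_neg_dual: "submartingale M (\<lambda>n. Fs (Suc n)) (\<lambda>n \<omega>. - dual n \<omega>)"
proof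
  show "subalgebra M (Fs (Suc n))" for n by (rule subalgebra_Fs)
  show "subalgebra (Fs (Suc (Suc n))) (Fs (Suc n))" for n unfolding Fs_def by (rule alg_filtration_mono) simp
  show "(\<lambda>\<omega>. - dual n \<omega>) \<in> borel_measurable (Fs (Suc n))" for n
    using measurable_state_Fs[of n] unfolding alg_dual_def by measurable
  show "integrable M (\<lambda>\<omega>. - dual n \<omega>)" for n using integrable_dual by simp
  show "(\<integral>\<omega>. indicator A \<omega> * - dual n \<omega> \<partial>M) \<le> (\<integral>\<omega>. indicator A \<omega> * - dual (Suc n) \<omega> \<partial>M)"
    if "A \<in> sets (Fs (Suc n))" for n A
    using set_integral_dual_Suc_le[OF that] by simp
qed

lemma bregman_convergent:
  "\<exists>Binf. Binf \<in> borel_measurable M \<and>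
     (AE \<omega> in M. (\<lambda>t. bregman (alg_phi (\<lambda>s. g s \<omega>) (\<lambda>s. eta s \<omega>) t) xstar (x t \<omega>)) \<longlonglongrightarrow> Binf \<omega>)"
proof -
  interpret neg_dual: submartingale M "\<lambda>n. Fs (Suc n)" "\<lambda>n \<omega>. - dual n \<omega>"
    by (rule submartingale_neg_dual)
  have "AE \<omega> in M. convergent (\<lambda>n. - dual n \<omega>)"
    using AE_dual_ge by (intro neg_dual.AE_convergent[where K="2 * (norm xstar)\<^sup>2 * exp (1 + \<gamma>/2)"])
      (auto elim!: eventually_mono simp: minus_le_iff)
  define B where "B t \<omega> = bregman (alg_phi (\<lambda>s. g s \<omega>) (\<lambda>s. eta s \<omega>) t) xstar (x t \<omega>)" for t \<omega>
  have B_eq: "B t \<omega> = alg_phi (\<lambda>s. g s \<omega>) (\<lambda>s. eta s \<omega>) t xstar + dual (t - 1) \<omega>" for t \<omega>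
    by (simp add: B_def x_def bregman_alg_eq)
  have [measurable]: "B t \<in> borel_measurable M" for t
    unfolding B_eq[abs_def] alg_phi_eq alg_dual_def by (measurable; simp add: alg_S2_pos)
  have "AE \<omega> in M. (\<lambda>t. B t \<omega>) \<longlonglongrightarrow> lim (\<lambda>t. B t \<omega>)"
    using \<open>AE \<omega> in M. convergent (\<lambda>n. - dual n \<omega>)\<close> AE_bounded_losses
  proof eventually_elim
    case (elim \<omega>)
    have "convergent (\<lambda>t. B (Suc t) \<omega>)"
      unfolding B_eq using convergent_alg_phi[of "\<lambda>s. g s \<omega>" "\<lambda>s. eta s \<omega>" \<gamma> xstar] elim
      by (auto intro!: convergent_add simp: convergent_minus_iff[of "\<lambda>n. dual n \<omega>"])
    hence "convergent (\<lambda>t. B t \<omega>)" unfolding convergent_def using LIMSEQ_imp_Suc[of "\<lambda>t. B t \<omega>"] by blast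
    thus ?case by (simp add: convergent_LIMSEQ_iff)
  qed
  moreover have "(\<lambda>\<omega>. lim (\<lambda>t. B t \<omega>)) \<in> borel_measurable M" by measurable
  ultimately show ?thesis unfolding B_def by blast
qed

end

theorem lemma3:
  fixes M :: "'a measure"
    and F :: "'v::euclidean_space \<Rightarrow> real" and gradF :: "'v \<Rightarrow> 'v" and xstar :: 'v
    and g :: "nat \<Rightarrow> 'a \<Rightarrow> 'v" and eta :: "nat \<Rightarrow> 'a \<Rightarrow> real"
    and G \<gamma> :: real
  defines "x \<equiv> (\<lambda>t \<omega>. alg_x (\<lambda>s. g s \<omega>) (\<lambda>s. eta s \<omega>) t)"
    and "\<phi> \<equiv> (\<lambda>t \<omega>. alg_phi (\<lambda>s. g s \<omega>) (\<lambda>s. eta s \<omega>) t)"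
    and "Fs \<equiv> alg_filtration M (\<lambda>t \<omega>. alg_x (\<lambda>s. g s \<omega>) (\<lambda>s. eta s \<omega>) t) g"
  assumes "prob_space M"
    and "G > 0"
    and "variationally_coherent F gradF xstar"
    and "\<And>t. t \<ge> 1 \<Longrightarrow> g t \<in> borel_measurable M"
    and "\<And>t. t \<ge> 1 \<Longrightarrow> eta t \<in> borel_measurable (Fs t)"
    and "\<And>t \<omega>. t \<ge> 1 \<Longrightarrow> \<omega> \<in> space M \<Longrightarrow> eta t \<omega> \<ge> 0"
    and "\<And>t b. t \<ge> 1 \<Longrightarrow> b \<in> Basis \<Longrightarrow>
           AE \<omega> in M. real_cond_exp M (Fs t) (\<lambda>\<omega>. g t \<omega> \<bullet> b) \<omega> = gradF (x t \<omega>) \<bullet> b"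
    and "\<And>t. t \<ge> 1 \<Longrightarrow> AE \<omega> in M. norm (g t \<omega>) \<le> G"
    and "\<gamma> > 0"
    and "AE \<omega> in M. summable (\<lambda>t. (eta (Suc t) \<omega>)\<^sup>2 * (norm (g (Suc t) \<omega>))\<^sup>2) \<and>
                     (\<Sum>t. (eta (Suc t) \<omega>)\<^sup>2 * (norm (g (Suc t) \<omega>))\<^sup>2) < \<gamma> \<and>
                     filterlim (\<lambda>n. \<Sum>t\<in>{1..n}. eta t \<omega>) at_top sequentially \<and>
                     (\<forall>t\<ge>1. eta t \<omega> \<le> 1 / G)"
  shows "\<exists>Binf. Binf \<in> borel_measurable M \<and>
           (AE \<omega> in M. (\<lambda>t. bregman (\<phi> t \<omega>) xstar (x t \<omega>)) \<longlonglongrightarrow> Binf \<omega>)"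
proof -
  have "continuous_on UNIV gradF" "\<And>y. gradF y \<bullet> (y - xstar) \<ge> 0"
    using assms(6) by (auto simp: variationally_coherent_def)
  moreover have "AE \<omega> in M. summable (\<lambda>t. (eta (Suc t) \<omega>)\<^sup>2 * (norm (g (Suc t) \<omega>))\<^sup>2) \<and>
      (\<Sum>t. (eta (Suc t) \<omega>)\<^sup>2 * (norm (g (Suc t) \<omega>))\<^sup>2) < \<gamma> \<and> (\<forall>t\<ge>1. eta t \<omega> \<le> 1 / G)"
    using assms(13) by eventually_elim blast
  ultimately interpret alg_stochastic_setting M gradF xstar g eta G \<gamma>
    using assms(4,5,7-11) unfolding x_def Fs_def
    by (intro alg_stochastic_setting.intro alg_stochastic_setting_axioms.intro)
  show ?thesis using bregman_convergent unfolding x_def \<phi>_def .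
qed

end
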